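(* The projective Fraïssé limit $\mathbb G$ is pointwise self-isomorphic: for every vertex $x$ of $\mathbb G$ and every neighborhood $U$ of $x$ there is a topological subgraph $V$ of $\mathbb G$ with $x\in V\subseteq U$ that is isomorphic to $\mathbb G$.
   Context: A graph is a pair $A=(V(A),E(A))$ with $E(A)\subseteq V(A)^2$ reflexive and symmetric; a topological graph additionally has $V$ compact, second countable, zero-dimensional and $E$ closed; subgraphs carry the induced edge relation. Epimorphisms are (continuous) edge-preserving maps surjective on vertices and edges; an isomorphism is an injective epimorphism. A vertex set $S$ is disconnected if it splits into two nonempty closed subsets with no edges between them; otherwise connected; components are maximal connected subsets. An epimorphism $f\colon A\to B$ is confluent if for every connected $Q\subseteq V(B)$ each component $C$ of $f^{-1}(Q)$ has $f(C)=Q$. $\mathbb G$ is the projective Fraïssé limit of the class of finite connected graphs with confluent epimorphisms: the unique topological graph such that (1) every finite connected graph is a confluent epimorphic image of $\mathbb G$; (2) for finite connected $A,B$ and confluent epimorphisms $f\colon\mathbb G\to A$, $g\colon B\to A$ there is a confluent epimorphism $h\colon\mathbb G\to B$ with $f=g\circ h$; (3) for each $\varepsilon>0$ some confluent epimorphism from $\mathbb G$ onto a finite connected graph has all point-preimages of diameter $<\varepsilon$. *)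

theory Defs
  imports "HOL-Analysis.Analysis"
begin

definition graph :: "'a set \<Rightarrow> ('a \<times> 'a) set \<Rightarrow> bool" where
  "graph V E \<longleftrightarrow> E \<subseteq> V \<times> V \<and> (\<forall>v\<in>V. (v, v) \<in> E) \<and> (\<forall>a b. (a, b) \<in> E \<longrightarrow> (b, a) \<in> E)"

definition zero_dim :: "'a topology \<Rightarrow> bool" where
  "zero_dim X \<longleftrightarrow> (\<forall>x U. openin X U \<and> x \<in> U \<longrightarrow>
      (\<exists>C. openin X C \<and> closedin X C \<and> x \<in> C \<and> C \<subseteq> U))"

text \<open>Topological graph, realised on a subset of a metric space (so that diameters make sense).\<close>
definition topological_graph :: "'a::metric_space set \<Rightarrow> ('a \<times> 'a) set \<Rightarrow> bool" where
  "topological_graph V E \<longleftrightarrow> graph V E \<and> compact V \<and> second_countable (top_of_set V)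
     \<and> zero_dim (top_of_set V) \<and> closed E"

definition gconnected :: "'a topology \<Rightarrow> ('a \<times> 'a) set \<Rightarrow> 'a set \<Rightarrow> bool" where
  "gconnected X E S \<longleftrightarrow> \<not> (\<exists>A B. closedin (subtopology X S) A \<and> closedin (subtopology X S) B
      \<and> A \<noteq> {} \<and> B \<noteq> {} \<and> A \<union> B = S \<and> A \<inter> B = {}
      \<and> (\<forall>a\<in>A. \<forall>b\<in>B. (a, b) \<notin> E))"

definition gcomponent :: "'a topology \<Rightarrow> ('a \<times> 'a) set \<Rightarrow> 'a set \<Rightarrow> 'a set \<Rightarrow> bool" where
  "gcomponent X E P C \<longleftrightarrow> C \<subseteq> P \<and> gconnected X E C
      \<and> (\<forall>D. C \<subseteq> D \<and> D \<subseteq> P \<and> gconnected X E D \<longrightarrow> D = C)"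

definition epimorphism :: "'a topology \<Rightarrow> ('a \<times> 'a) set \<Rightarrow> 'b topology \<Rightarrow> ('b \<times> 'b) set
    \<Rightarrow> ('a \<Rightarrow> 'b) \<Rightarrow> bool" where
  "epimorphism X EA Y EB f \<longleftrightarrow> continuous_map X Y f \<and> f ` topspace X = topspace Y
     \<and> (\<forall>a b. (a, b) \<in> EA \<longrightarrow> (f a, f b) \<in> EB)
     \<and> (\<lambda>(a, b). (f a, f b)) ` EA = EB"

definition isomorphism :: "'a topology \<Rightarrow> ('a \<times> 'a) set \<Rightarrow> 'b topology \<Rightarrow> ('b \<times> 'b) set
    \<Rightarrow> ('a \<Rightarrow> 'b) \<Rightarrow> bool" where
  "isomorphism X EA Y EB f \<longleftrightarrow> epimorphism X EA Y EB f \<and> inj_on f (topspace X)"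

definition confluent :: "'a topology \<Rightarrow> ('a \<times> 'a) set \<Rightarrow> 'b topology \<Rightarrow> ('b \<times> 'b) set
    \<Rightarrow> ('a \<Rightarrow> 'b) \<Rightarrow> bool" where
  "confluent X EA Y EB f \<longleftrightarrow> epimorphism X EA Y EB f \<and>
     (\<forall>Q. Q \<subseteq> topspace Y \<and> gconnected Y EB Q \<longrightarrow>
        (\<forall>C. gcomponent X EA (topspace X \<inter> f -` Q) C \<longrightarrow> f ` C = Q))"

text \<open>Finite (nonempty) connected graphs; vertices taken in nat (every finite graph is isomorphic
  to one of these), with the discrete topology.\<close>
definition finite_connected_graph :: "nat set \<Rightarrow> (nat \<times> nat) set \<Rightarrow> bool" where
  "finite_connected_graph V E \<longleftrightarrow> finite V \<and> V \<noteq> {} \<and> graph V E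
     \<and> gconnected (discrete_topology V) E V"

text \<open>The characterisation (1)-(3) of the projective Fraisse limit of finite connected graphs
  with confluent epimorphisms.\<close>
definition is_Fraisse_limit :: "'a::metric_space set \<Rightarrow> ('a \<times> 'a) set \<Rightarrow> bool" where
  "is_Fraisse_limit V E \<longleftrightarrow> topological_graph V E
   \<and> (\<forall>VA EA. finite_connected_graph VA EA \<longrightarrow>
        (\<exists>f. confluent (top_of_set V) E (discrete_topology VA) EA f))
   \<and> (\<forall>VA EA VB EB f g. finite_connected_graph VA EA \<and> finite_connected_graph VB EB
        \<and> confluent (top_of_set V) E (discrete_topology VA) EA f
        \<and> confluent (discrete_topology VB) EB (discrete_topology VA) EA g \<longrightarrow>
        (\<exists>h. confluent (top_of_set V) E (discrete_topology VB) EB h \<and> (\<forall>x\<in>V. f x = g (h x))))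
   \<and> (\<forall>\<epsilon>>0. \<exists>VA EA f. finite_connected_graph VA EA
        \<and> confluent (top_of_set V) E (discrete_topology VA) EA f
        \<and> (\<forall>a\<in>VA. diameter (V \<inter> f -` {a}) < \<epsilon>))"

end

(*
  Let P be a confluent map from G onto a finite connected graph whose fibres have small diameter,
  and let V be the component through x of the fibre of P containing x. Then V lies over the
  one-vertex graph exactly as G does. Starting from this, the maps on V and on G are refined
  alternately: a map on one side is factored through a finer confluent map from G, and the
  amalgamation property of the Fraisse limit transfers the refinement to the other side, so that
  at every stage V and G lie over one and the same finite connected graph, with matching vertex
  and edge images. Both are compact and the fibres shrink to points, so the two inverse systems of
  finite shadows define a graph isomorphism between V and G.
*)
theory Submission
  imports Defs
begin

section \<open>Connectedness of vertex sets\<close>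

lemma gconnectedD:
  assumes "gconnected X E S" "closedin (subtopology X S) A" "closedin (subtopology X S) B"
    "A \<noteq> {}" "B \<noteq> {}" "A \<union> B = S" "A \<inter> B = {}" "\<forall>a\<in>A. \<forall>b\<in>B. (a, b) \<notin> E"
  shows False
  using assms unfolding gconnected_def by blast

lemma gconnected_singleton: "gconnected X E {v}"
  unfolding gconnected_def by (auto simp: Un_singleton_iff)

lemma gconnected_Union:
  assumes conn: "\<And>T. T \<in> \<F> \<Longrightarrow> gconnected X E T" and common: "\<And>T. T \<in> \<F> \<Longrightarrow> v \<in> T"
  shows "gconnected X E (\<Union>\<F>)"
proof (rule ccontr)
  assume "\<not> gconnected X E (\<Union>\<F>)"
  then obtain A B where A: "closedin (subtopology X (\<Union>\<F>)) A" and B: "closedin (subtopology X (\<Union>\<F>)) B"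
    and ne: "A \<noteq> {}" "B \<noteq> {}" and cover: "A \<union> B = \<Union>\<F>" and disj: "A \<inter> B = {}"
    and no_edge: "\<forall>a\<in>A. \<forall>b\<in>B. (a, b) \<notin> E"
    unfolding gconnected_def by blast
  have one_side: "T \<subseteq> A \<or> T \<subseteq> B" if T: "T \<in> \<F>" for T
  proof (rule ccontr)
    assume "\<not> (T \<subseteq> A \<or> T \<subseteq> B)"
    moreover have "closedin (subtopology X T) (T \<inter> A)" "closedin (subtopology X T) (T \<inter> B)"
      using A B T by (auto simp: closedin_subtopology)
    ultimately show False
      using gconnectedD[OF conn[OF T], of "T \<inter> A" "T \<inter> B"] T cover disj no_edge by blast
  qed
  obtain T0 where "T0 \<in> \<F>"
    using ne cover by blast
  then have "v \<in> A \<union> B"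
    using common cover by blast
  then have "\<Union>\<F> \<subseteq> A \<or> \<Union>\<F> \<subseteq> B"
    using one_side common disj by blast
  then show False
    using ne cover disj by blast
qed

lemma gconnected_Un:
  assumes "gconnected X E S" "gconnected X E T" "v \<in> S" "v \<in> T"
  shows "gconnected X E (S \<union> T)"
  using gconnected_Union[of "{S, T}" X E v] assms by auto

lemma gconnected_closure_of:
  assumes conn: "gconnected X E K" and K: "K \<subseteq> topspace X"
  shows "gconnected X E (X closure_of K)"
proof (rule ccontr)
  let ?C = "X closure_of K"
  assume "\<not> gconnected X E ?C"
  then obtain A B where "closedin (subtopology X ?C) A" "closedin (subtopology X ?C) B"
    and ne: "A \<noteq> {}" "B \<noteq> {}" and cover: "A \<union> B = ?C" and disj: "A \<inter> B = {}"
    and no_edge: "\<forall>a\<in>A. \<forall>b\<in>B. (a, b) \<notin> E"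
    unfolding gconnected_def by blast
  then have AB: "closedin X A" "closedin X B"
    by (auto simp: closedin_closed_subtopology)
  have "K \<subseteq> ?C"
    using K by (rule closure_of_subset)
  then have "K \<inter> A = {} \<or> K \<inter> B = {}"
    using gconnectedD[OF conn, of "K \<inter> A" "K \<inter> B"] AB cover disj no_edge
    by (auto simp: closedin_subtopology_Int_closed)
  then have "K \<subseteq> B \<or> K \<subseteq> A"
    using \<open>K \<subseteq> ?C\<close> cover by blast
  then have "?C \<subseteq> B \<or> ?C \<subseteq> A"
    using AB closure_of_minimal by metis
  then show False
    using ne cover disj by blast
qed

lemma gcomponent_exists:
  assumes "v \<in> S"
  obtains K where "gcomponent X E S K" "v \<in> K"
proof
  let ?K = "\<Union>{T. T \<subseteq> S \<and> v \<in> T \<and> gconnected X E T}"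
  have conn: "gconnected X E ?K"
    by (rule gconnected_Union[where v = v]) auto
  have "{v} \<subseteq> ?K"
    using assms gconnected_singleton[of X E v] by blast
  then show "v \<in> ?K"
    by blast
  have "D \<subseteq> ?K" if "?K \<subseteq> D" "D \<subseteq> S" "gconnected X E D" for D
    using that \<open>v \<in> ?K\<close> by blast
  then show "gcomponent X E S ?K"
    unfolding gcomponent_def using conn by (simp add: Sup_le_iff subset_antisym)
qed

lemma gcomponent_maximal:
  assumes K: "gcomponent X E S K" and "T \<subseteq> S" "gconnected X E T" "T \<inter> K \<noteq> {}"
  shows "T \<subseteq> K"
proof -
  obtain v where "v \<in> T" "v \<in> K"
    using assms(4) by blast
  then have "gconnected X E (K \<union> T)"
    using gconnected_Un[of X E K T v] K assms(3) unfolding gcomponent_def by blast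
  moreover have "K \<union> T \<subseteq> S"
    using K assms(2) unfolding gcomponent_def by blast
  ultimately have "K \<union> T = K"
    using K unfolding gcomponent_def by (meson Un_upper1)
  then show ?thesis
    by blast
qed

lemma gcomponent_nonempty:
  assumes "gcomponent X E S K" "S \<noteq> {}"
  shows "K \<noteq> {}"
proof
  assume "K = {}"
  obtain s where "s \<in> S"
    using assms(2) by blast
  then have "{s} = K"
    using assms(1) gconnected_singleton[of X E s] \<open>K = {}\<close> unfolding gcomponent_def by blast
  then show False
    using \<open>K = {}\<close> by blast
qed

lemma gcomponent_subset:
  assumes "gcomponent X E S K" "K \<subseteq> S'" "S' \<subseteq> S"
  shows "gcomponent X E S' K"
  using assms unfolding gcomponent_def by (meson order_trans)

lemma gcomponent_closedin:
  assumes K: "gcomponent X E S K" and S: "closedin X S"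
  shows "closedin X K"
proof -
  have KS: "K \<subseteq> S" and conn: "gconnected X E K"
    using K unfolding gcomponent_def by blast+
  moreover have "K \<subseteq> topspace X"
    using KS closedin_subset[OF S] by blast
  ultimately have "gconnected X E (X closure_of K)" "K \<subseteq> X closure_of K"
    by (simp_all add: gconnected_closure_of closure_of_subset)
  moreover have "X closure_of K \<subseteq> S"
    using KS S by (rule closure_of_minimal)
  ultimately have "X closure_of K = K"
    using K unfolding gcomponent_def by blast
  then show ?thesis
    by (metis closedin_closure_of)
qed

section \<open>Finite graphs and confluent maps between them\<close>

definition edge_connected :: "('b \<times> 'b) set \<Rightarrow> 'b set \<Rightarrow> bool" where
  "edge_connected E S \<longleftrightarrow> \<not> (\<exists>A B. A \<noteq> {} \<and> B \<noteq> {} \<and> A \<union> B = S \<and> A \<inter> B = {}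
      \<and> (\<forall>a\<in>A. \<forall>b\<in>B. (a, b) \<notin> E))"

lemma edge_connectedD:
  assumes "edge_connected E S" "A \<noteq> {}" "B \<noteq> {}" "A \<union> B = S" "A \<inter> B = {}"
    "\<forall>a\<in>A. \<forall>b\<in>B. (a, b) \<notin> E"
  shows False
  using assms unfolding edge_connected_def by blast

lemma gconnected_discrete_topology:
  assumes "S \<subseteq> D"
  shows "gconnected (discrete_topology D) E S \<longleftrightarrow> edge_connected E S"
proof -
  have "closedin (subtopology (discrete_topology D) S) A" if "A \<subseteq> S" for A
    using that assms by auto
  then show ?thesis
    unfolding gconnected_def edge_connected_def by (metis Un_upper1 Un_upper2)
qed

lemma edge_connected_restrict:
  assumes "S \<subseteq> A"
  shows "edge_connected (E \<inter> A \<times> A) S \<longleftrightarrow> edge_connected E S"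
proof -
  have "(\<forall>a\<in>P. \<forall>b\<in>R. (a, b) \<notin> E \<inter> A \<times> A) \<longleftrightarrow> (\<forall>a\<in>P. \<forall>b\<in>R. (a, b) \<notin> E)"
    if "P \<union> R = S" for P R
    using that assms by blast
  then show ?thesis
    unfolding edge_connected_def by (intro arg_cong[where f = Not] ex_cong1 conj_cong) simp_all
qed

lemma edge_connected_singleton: "edge_connected E {v}"
  unfolding edge_connected_def by (auto simp: Un_singleton_iff)

lemma edge_connected_pair:
  assumes "(a, b) \<in> E" "(b, a) \<in> E"
  shows "edge_connected E {a, b}"
  unfolding edge_connected_def
proof clarify
  fix A B assume "A \<noteq> {}" "B \<noteq> {}" "A \<union> B = {a, b}" "A \<inter> B = {}"
    and no_edge: "\<forall>x\<in>A. \<forall>y\<in>B. (x, y) \<notin> E"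
  then obtain x y where "x \<in> A" "y \<in> B" "x \<in> {a, b}" "y \<in> {a, b}" "x \<noteq> y"
    by blast
  moreover from this(3-5) have "(x, y) \<in> E"
    using assms by auto
  ultimately show False
    using no_edge by blast
qed
lemma edge_connected_one_side:
  assumes "edge_connected E T" "T \<subseteq> A \<union> B" "A \<inter> B = {}" "\<forall>a\<in>A. \<forall>b\<in>B. (a, b) \<notin> E"
  shows "T \<subseteq> A \<or> T \<subseteq> B"
  using edge_connectedD[OF assms(1), of "T \<inter> A" "T \<inter> B"] assms(2-4) by blast

lemma edge_connected_saturated:
  assumes "edge_connected E Q" "S \<subseteq> Q" "S \<noteq> {}"
    and closed: "\<And>s t. s \<in> S \<Longrightarrow> t \<in> Q \<Longrightarrow> (s, t) \<in> E \<Longrightarrow> t \<in> S"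
  shows "S = Q"
proof (rule ccontr)
  assume "S \<noteq> Q"
  then show False
    using edge_connectedD[OF assms(1), of S "Q - S"] assms(2,3) closed by blast
qed

lemma edge_connected_image:
  assumes f: "continuous_map X (discrete_topology D) f"
    and edges: "\<And>a b. (a, b) \<in> E \<Longrightarrow> (f a, f b) \<in> E'"
    and conn: "gconnected X E S" and S: "S \<subseteq> topspace X"
  shows "edge_connected E' (f ` S)"
  unfolding edge_connected_def
proof clarify
  fix A B assume ne: "A \<noteq> {}" "B \<noteq> {}" and cover: "A \<union> B = f ` S" and disj: "A \<inter> B = {}"
    and no_edge: "\<forall>a\<in>A. \<forall>b\<in>B. (a, b) \<notin> E'"
  have closed: "closedin (subtopology X S) (S \<inter> f -` Z)" for Z
  proof -
    have "closedin X {x \<in> topspace X. f x \<in> Z \<inter> D}"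
      by (rule closedin_continuous_map_preimage[OF f]) simp
    moreover have "{x \<in> topspace X. f x \<in> Z \<inter> D} \<inter> S = S \<inter> f -` Z"
      using S continuous_map_image_subset_topspace[OF f] by auto
    ultimately show ?thesis
      unfolding closedin_subtopology by blast
  qed
  have hit: "S \<inter> f -` C \<noteq> {}" if C: "C \<noteq> {}" "C \<subseteq> f ` S" for C
  proof -
    obtain c where "c \<in> C"
      using C(1) by blast
    moreover obtain s where "s \<in> S" "f s = c"
      using C(2) \<open>c \<in> C\<close> by blast
    ultimately show ?thesis
      by blast
  qed
  show False
  proof (rule gconnectedD[OF conn closed[of A] closed[of B]])
    show "S \<inter> f -` A \<noteq> {}" "S \<inter> f -` B \<noteq> {}"
      using hit ne cover by (metis Un_upper1 Un_upper2)+
    show "(S \<inter> f -` A) \<union> (S \<inter> f -` B) = S" "(S \<inter> f -` A) \<inter> (S \<inter> f -` B) = {}"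
      using cover disj by blast+
    show "\<forall>a\<in>S \<inter> f -` A. \<forall>b\<in>S \<inter> f -` B. (a, b) \<notin> E"
      using no_edge edges by blast
  qed
qed

lemma finite_connected_graph_iff:
  "finite_connected_graph V E \<longleftrightarrow> finite V \<and> V \<noteq> {} \<and> graph V E \<and> edge_connected E V"
  unfolding finite_connected_graph_def by (simp add: gconnected_discrete_topology)

lemma epimorphism_iff:
  "epimorphism X EA Y EB f \<longleftrightarrow>
     continuous_map X Y f \<and> f ` topspace X = topspace Y \<and> map_prod f f ` EA = EB"
proof -
  have "map_prod f f ` EA = EB \<Longrightarrow> (a, b) \<in> EA \<Longrightarrow> (f a, f b) \<in> EB" for a b
    by force
  then show ?thesis
    unfolding epimorphism_def map_prod_def by blast
qed

lemma confluent_imp_epimorphism: "confluent X EA Y EB f \<Longrightarrow> epimorphism X EA Y EB f"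
  unfolding confluent_def by blast

lemma confluent_component_image:
  assumes "confluent X E (discrete_topology D) E' f" "Q \<subseteq> D" "edge_connected E' Q"
    "gcomponent X E (topspace X \<inter> f -` Q) K"
  shows "f ` K = Q"
  using assms gconnected_discrete_topology[OF assms(2)] unfolding confluent_def by simp

text \<open>Under the lifting condition, the image of a component of the preimage of a connected set
  is closed under taking neighbours inside that set, hence is all of it.\<close>

lemma confluent_discreteI:
  assumes epi: "epimorphism (discrete_topology A1) E1 (discrete_topology A) E \<psi>"
    and lift: "\<And>Q m t. Q \<subseteq> A \<Longrightarrow> edge_connected E Q \<Longrightarrow> m \<in> A1 \<Longrightarrow> \<psi> m \<in> Q \<Longrightarrow> t \<in> Q
      \<Longrightarrow> (\<psi> m, t) \<in> E \<Longrightarrow> \<exists>L. m \<in> L \<and> L \<subseteq> A1 \<inter> \<psi> -` Q \<and> edge_connected E1 L \<and> t \<in> \<psi> ` L"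
  shows "confluent (discrete_topology A1) E1 (discrete_topology A) E \<psi>"
  unfolding confluent_def
proof (intro conjI epi allI impI, elim conjE)
  fix Q K
  assume "Q \<subseteq> topspace (discrete_topology A)" "gconnected (discrete_topology A) E Q"
    and K: "gcomponent (discrete_topology A1) E1 (topspace (discrete_topology A1) \<inter> \<psi> -` Q) K"
  then have QA: "Q \<subseteq> A" and Q: "edge_connected E Q"
    by (simp_all add: gconnected_discrete_topology)
  have KQ: "K \<subseteq> A1 \<inter> \<psi> -` Q"
    using K unfolding gcomponent_def by simp
  show "\<psi> ` K = Q"
  proof (cases "Q = {}")
    case False
    have "\<psi> ` A1 = A"
      using epi unfolding epimorphism_def by simp
    then have "A1 \<inter> \<psi> -` Q \<noteq> {}"
      using False QA by blast
    then have "\<psi> ` K \<noteq> {}"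
      using gcomponent_nonempty[OF K] by simp
    moreover have "\<psi> ` K \<subseteq> Q"
      using KQ by blast
    moreover have "t \<in> \<psi> ` K" if st: "s \<in> \<psi> ` K" "t \<in> Q" "(s, t) \<in> E" for s t
    proof -
      obtain m where m: "m \<in> K" "s = \<psi> m"
        using st(1) by blast
      then have mQ: "m \<in> A1" "\<psi> m \<in> Q" "(\<psi> m, t) \<in> E"
        using KQ st(3) by auto
      obtain L where L: "m \<in> L" "L \<subseteq> A1 \<inter> \<psi> -` Q" "edge_connected E1 L" "t \<in> \<psi> ` L"
        using lift[OF QA Q mQ(1,2) st(2) mQ(3)] by blast
      have "gconnected (discrete_topology A1) E1 L"
        using L(2,3) by (simp add: gconnected_discrete_topology le_infE)
      then have "L \<subseteq> K"
        using gcomponent_maximal[OF K] L(1,2) m(1) by auto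
      then show ?thesis
        using L(4) by blast
    qed
    ultimately show ?thesis
      using edge_connected_saturated[OF Q, of "\<psi> ` K"] by blast
  qed (use KQ in simp)
qed

lemma finite_connected_graph_restrict:
  assumes "finite_connected_graph D ED" "A \<subseteq> D" "A \<noteq> {}" "edge_connected ED A"
  shows "finite_connected_graph A (ED \<inter> A \<times> A)"
  using assms finite_subset unfolding finite_connected_graph_iff graph_def
  by (auto simp: edge_connected_restrict)

lemma finite_connected_graph_singleton: "finite_connected_graph {a} {(a, a)}"
  by (simp add: finite_connected_graph_iff graph_def edge_connected_singleton)

lemma gconnected_edge_between_fibres:
  assumes conn: "gconnected X E L" and L: "L \<subseteq> topspace X"
    and f: "continuous_map X (discrete_topology UNIV) f" and image: "f ` L = {a, b}" and "a \<noteq> b"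
  obtains x y where "x \<in> L" "y \<in> L" "(x, y) \<in> E" "f x = a" "f y = b"
proof -
  have closed: "closedin (subtopology X L) (L \<inter> f -` {c})" for c
  proof -
    have "closedin X {x \<in> topspace X. f x \<in> {c}}"
      by (rule closedin_continuous_map_preimage[OF f]) simp
    then have "closedin (subtopology X L) (L \<inter> {x \<in> topspace X. f x \<in> {c}})"
      by (rule closedin_subtopology_Int_closed)
    moreover have "L \<inter> {x \<in> topspace X. f x \<in> {c}} = L \<inter> f -` {c}"
      using L by auto
    ultimately show ?thesis
      by simp
  qed
  have hit: "L \<inter> f -` {c} \<noteq> {}" if c: "c \<in> {a, b}" for c
  proof -
    obtain x where "c = f x" "x \<in> L"
      using c image by (metis imageE)
    then show ?thesis
      by blast
  qed
  have "f x = a \<or> f x = b" if "x \<in> L" for x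
    using image that by (metis imageI insertE singletonD)
  then have cover: "L \<inter> f -` {a} \<union> L \<inter> f -` {b} = L"
    by blast
  have disj: "L \<inter> f -` {a} \<inter> (L \<inter> f -` {b}) = {}"
    using \<open>a \<noteq> b\<close> by blast
  have "\<not> (\<forall>x\<in>L \<inter> f -` {a}. \<forall>y\<in>L \<inter> f -` {b}. (x, y) \<notin> E)"
    using gconnectedD[OF conn closed[of a] closed[of b] hit[of a] hit[of b] cover disj] by blast
  then show ?thesis
    using that by blast
qed

lemma edge_image_not_separated:
  assumes conn: "edge_connected ED (P ` (S \<union> T))" and edges: "map_prod P P ` E = ED"
    "E \<subseteq> (S \<union> T) \<times> (S \<union> T)"
    and "S \<noteq> {}" "T \<noteq> {}" and disj: "P ` S \<inter> P ` T = {}" and no_edge: "\<forall>a\<in>S. \<forall>b\<in>T. (a, b) \<notin> E"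
  shows False
proof (rule edge_connectedD[OF conn])
  show "P ` S \<noteq> {}" "P ` T \<noteq> {}"
    using assms(4,5) by simp_all
  show "P ` S \<union> P ` T = P ` (S \<union> T)" "P ` S \<inter> P ` T = {}"
    by (simp_all add: image_Un disj)
  show "\<forall>a\<in>P ` S. \<forall>b\<in>P ` T. (a, b) \<notin> ED"
  proof clarify
    fix s t assume st: "s \<in> S" "t \<in> T" "(P s, P t) \<in> ED"
    then obtain e where "e \<in> E" "map_prod P P e = (P s, P t)"
      using edges(1) by (metis imageE)
    moreover obtain u v where "e = (u, v)"
      by fastforce
    ultimately have uv: "(u, v) \<in> E" "P u = P s" "P v = P t" "u \<in> S \<union> T" "v \<in> S \<union> T"
      using edges(2) by auto
    have "u \<in> S" "v \<in> T"
      using uv(2-5) st(1,2) disj by blast+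
    then show False
      using no_edge uv(1) by blast
  qed
qed

section \<open>Locally constant maps on compact metric spaces\<close>

lemma continuous_map_discrete_UNIV_iff:
  "continuous_map X (discrete_topology UNIV) f \<longleftrightarrow> (\<forall>a. openin X {x \<in> topspace X. f x = a})"
proof
  assume "continuous_map X (discrete_topology UNIV) f"
  then show "\<forall>a. openin X {x \<in> topspace X. f x = a}"
    using openin_continuous_map_preimage[of X _ f "{_}"] by simp
next
  assume fibres: "\<forall>a. openin X {x \<in> topspace X. f x = a}"
  have "openin X {x \<in> topspace X. f x \<in> U}" for U
  proof -
    have "{x \<in> topspace X. f x \<in> U} = (\<Union>a\<in>U. {x \<in> topspace X. f x = a})"
      by blast
    then show ?thesis
      using fibres by (metis (no_types, lifting) imageE openin_Union)
  qed
  then show "continuous_map X (discrete_topology UNIV) f"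
    unfolding continuous_map_def by simp
qed

lemma continuous_map_discrete_UNIV:
  "continuous_map X (discrete_topology D) f \<Longrightarrow> continuous_map X (discrete_topology UNIV) f"
  by (metis continuous_map_in_subtopology inf_top_left subtopology_discrete_topology)

lemma closed_preimage_locally_constant:
  fixes K :: "'a::metric_space set"
  assumes "compact K" "continuous_map (top_of_set K) (discrete_topology UNIV) f"
  shows "closed (K \<inter> f -` B)"
proof -
  have "closedin (top_of_set K) {x \<in> topspace (top_of_set K). f x \<in> B}"
    by (rule closedin_continuous_map_preimage[OF assms(2)]) simp
  moreover have "{x \<in> topspace (top_of_set K). f x \<in> B} = K \<inter> f -` B"
    by auto
  ultimately show ?thesis
    using closedin_closed_trans[OF _ compact_imp_closed[OF assms(1)]] by simp
qed

definition mesh_less :: "'a::metric_space set \<Rightarrow> ('a \<Rightarrow> 'b) \<Rightarrow> real \<Rightarrow> bool" where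
  "mesh_less X p \<epsilon> \<longleftrightarrow> (\<forall>u\<in>X. \<forall>v\<in>X. p u = p v \<longrightarrow> dist u v < \<epsilon>)"

lemma mesh_less_subset: "mesh_less X p \<epsilon> \<Longrightarrow> Y \<subseteq> X \<Longrightarrow> mesh_less Y p \<epsilon>"
  unfolding mesh_less_def by blast

lemma mesh_less_refine:
  assumes "mesh_less X p \<epsilon>" "\<And>u. u \<in> X \<Longrightarrow> p u = g (p' u)"
  shows "mesh_less X p' \<epsilon>"
  using assms unfolding mesh_less_def by metis

lemma mesh_less_mono: "mesh_less X p \<epsilon> \<Longrightarrow> \<epsilon> \<le> \<epsilon>' \<Longrightarrow> mesh_less X p \<epsilon>'"
  unfolding mesh_less_def by fastforce

lemma mesh_less_vanishing:
  assumes "\<And>n. mesh_less X (p (Suc n)) (inverse (Suc n))" "\<epsilon> > 0"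
  obtains n where "mesh_less X (p n) \<epsilon>"
proof -
  obtain n where "inverse (real (Suc n)) < \<epsilon>"
    using reals_Archimedean[OF assms(2)] by blast
  then show ?thesis
    using that assms(1)[of n] mesh_less_mono by (metis less_le)
qed

lemma mesh_less_diameter:
  assumes "bounded X" "\<And>a. a \<in> p ` X \<Longrightarrow> diameter (X \<inter> p -` {a}) < \<epsilon>"
  shows "mesh_less X p \<epsilon>"
  unfolding mesh_less_def
proof (intro ballI impI)
  fix u v assume uv: "u \<in> X" "v \<in> X" "p u = p v"
  have "bounded (X \<inter> p -` {p u})"
    using assms(1) by (rule bounded_subset) blast
  then have "dist u v \<le> diameter (X \<inter> p -` {p u})"
    using uv by (intro diameter_bounded_bound) auto
  also have "\<dots> < \<epsilon>"
    using assms(2) uv(1) by blast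
  finally show "dist u v < \<epsilon>" .
qed

lemma locally_constant_uniformly:
  fixes K :: "'a::metric_space set"
  assumes "compact K" and f: "continuous_map (top_of_set K) (discrete_topology UNIV) f"
  obtains \<delta> where "\<delta> > 0" "\<And>u v. u \<in> K \<Longrightarrow> v \<in> K \<Longrightarrow> dist u v < \<delta> \<Longrightarrow> f u = f v"
proof -
  define \<G> where "\<G> = {T. open T \<and> (\<exists>a. K \<inter> T \<subseteq> f -` {a})}"
  have cover: "K \<subseteq> \<Union>\<G>"
  proof
    fix u assume "u \<in> K"
    have "openin (top_of_set K) {x \<in> K. f x = f u}"
      using f unfolding continuous_map_discrete_UNIV_iff by simp
    then obtain T where "open T" "{x \<in> K. f x = f u} = K \<inter> T"
      unfolding openin_open by blast
    then show "u \<in> \<Union>\<G>"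
      using \<open>u \<in> K\<close> unfolding \<G>_def by blast
  qed
  have opens: "\<And>G. G \<in> \<G> \<Longrightarrow> open G"
    unfolding \<G>_def by blast
  obtain \<delta> where "\<delta> > 0" and \<delta>: "\<And>u. u \<in> K \<Longrightarrow> \<exists>G\<in>\<G>. ball u \<delta> \<subseteq> G"
    using Heine_Borel_lemma[OF assms(1) cover opens] by blast
  have "f u = f v" if uv: "u \<in> K" "v \<in> K" "dist u v < \<delta>" for u v
  proof -
    obtain T a where "ball u \<delta> \<subseteq> T" "K \<inter> T \<subseteq> f -` {a}"
      using \<delta>[OF uv(1)] unfolding \<G>_def by blast
    moreover have "u \<in> ball u \<delta>" "v \<in> ball u \<delta>"
      using \<open>\<delta> > 0\<close> uv(3) by simp_all
    ultimately show ?thesis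
      using uv(1,2) by blast
  qed
  then show ?thesis
    using \<open>\<delta> > 0\<close> that by blast
qed

lemma factor_through:
  assumes "\<And>u v. u \<in> K \<Longrightarrow> v \<in> K \<Longrightarrow> k u = k v \<Longrightarrow> P u = P v"
  obtains \<psi> where "\<And>u. u \<in> K \<Longrightarrow> P u = \<psi> (k u)"
proof
  fix u assume "u \<in> K"
  then have "inv_into K k (k u) \<in> K" "k (inv_into K k (k u)) = k u"
    by (simp_all add: inv_into_into f_inv_into_f)
  then show "P u = (P \<circ> inv_into K k) (k u)"
    using assms[of u "inv_into K k (k u)"] \<open>u \<in> K\<close> by (metis comp_apply)
qed

lemma zero_dim_subtopology:
  assumes "zero_dim X"
  shows "zero_dim (subtopology X S)"
  unfolding zero_dim_def
proof (intro allI impI, elim conjE)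
  fix x U assume "openin (subtopology X S) U" "x \<in> U"
  then obtain T where T: "openin X T" "U = T \<inter> S" "x \<in> T"
    unfolding openin_subtopology by blast
  then obtain C where "openin X C" "closedin X C" "x \<in> C" "C \<subseteq> T"
    using assms unfolding zero_dim_def by blast
  moreover have "openin (subtopology X S) (C \<inter> S)"
    by (rule openin_subtopology_Int[OF \<open>openin X C\<close>])
  moreover have "closedin (subtopology X S) (C \<inter> S)"
    using closedin_subtopology_Int_closed[OF \<open>closedin X C\<close>, of S] by (simp add: Int_commute)
  ultimately show "\<exists>C. openin (subtopology X S) C \<and> closedin (subtopology X S) C \<and> x \<in> C \<and> C \<subseteq> U"
    using T \<open>x \<in> U\<close> by blast
qed

lemma topological_graph_closed_subgraph:
  assumes G: "topological_graph V E" and "X \<subseteq> V" "closed X"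
  shows "topological_graph X (E \<inter> X \<times> X)"
proof -
  have sub: "top_of_set X = subtopology (top_of_set V) X"
    using assms(2) by (simp add: subtopology_subtopology Int_absorb1)
  have "graph X (E \<inter> X \<times> X)"
    using G assms(2) unfolding topological_graph_def graph_def by blast
  moreover have "compact X"
    using G assms(3) unfolding topological_graph_def by (metis assms(2) compact_Int_closed inf.absorb2)
  moreover have "second_countable (top_of_set X)" "zero_dim (top_of_set X)"
    using G second_countable_subtopology zero_dim_subtopology unfolding sub topological_graph_def by blast+
  moreover have "closed (E \<inter> X \<times> X)"
    using G assms(3) unfolding topological_graph_def by (simp add: closed_Int closed_Times)
  ultimately show ?thesis
    unfolding topological_graph_def by blast
qed

section \<open>Inverse systems of finite shadows\<close>

lemma compact_nested_closed:
  assumes "compact K" "\<And>n. closed (S n)" "\<And>n. S n \<noteq> {}" "\<And>n. S (Suc n) \<subseteq> S n"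
    "\<And>n. S n \<subseteq> K"
  obtains z where "\<And>n. z \<in> S n"
proof -
  have "K \<inter> (\<Inter>n\<in>UNIV. S n) \<noteq> {}"
  proof (rule compact_imp_fip_image[OF assms(1,2)])
    fix I :: "nat set" assume "finite I"
    define N where "N = Max (insert 0 I)"
    have "S N \<subseteq> S i" if "i \<in> I" for i
      using \<open>finite I\<close> that lift_Suc_antimono_le[of S, OF assms(4)] unfolding N_def by simp
    then show "K \<inter> (\<Inter>i\<in>I. S i) \<noteq> {}"
      using assms(3,5)[of N] by blast
  qed
  then show ?thesis
    using that by blast
qed

lemma mesh_less_later:
  assumes "mesh_less X (p N) \<epsilon>" "N \<le> n" "\<And>n u. u \<in> X \<Longrightarrow> p n u = g n (p (Suc n) u)"
  shows "mesh_less X (p n) \<epsilon>"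
  using assms(2)
proof (induction n rule: dec_induct)
  case (step n)
  then show ?case
    using mesh_less_refine[of X "p n" \<epsilon> "g n" "p (Suc n)"] assms(3) by blast
qed (rule assms(1))

lemma eq_if_same_address:
  assumes "\<And>\<epsilon>. \<epsilon> > 0 \<Longrightarrow> \<exists>n. mesh_less X (p n) \<epsilon>" "u \<in> X" "v \<in> X" "\<And>n. p n u = p n v"
  shows "u = v"
proof (rule ccontr)
  assume "u \<noteq> v"
  then obtain n where "mesh_less X (p n) (dist u v)"
    using assms(1)[of "dist u v"] by auto
  then show False
    using assms(2-4) unfolding mesh_less_def by blast
qed

lemma exists_point_with_address:
  fixes Y :: "'a::metric_space set"
  assumes Y: "compact Y" and q: "\<And>n. continuous_map (top_of_set Y) (discrete_topology UNIV) (q n)"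
    and refine: "\<And>n z. z \<in> Y \<Longrightarrow> q n z = g n (q (Suc n) z)"
    and a: "\<And>n. a n \<in> q n ` Y" "\<And>n. a n = g n (a (Suc n))"
  obtains z where "z \<in> Y" "\<And>n. q n z = a n"
proof -
  have "closed (Y \<inter> q n -` {a n})" for n
    by (rule closed_preimage_locally_constant[OF Y q])
  moreover have "Y \<inter> q n -` {a n} \<noteq> {}" for n
  proof -
    obtain z where "a n = q n z" "z \<in> Y"
      using a(1)[of n] by (rule imageE)
    then have "z \<in> Y \<inter> q n -` {a n}"
      by simp
    then show ?thesis
      by blast
  qed
  moreover have "Y \<inter> q (Suc n) -` {a (Suc n)} \<subseteq> Y \<inter> q n -` {a n}" for n
  proof
    fix z assume "z \<in> Y \<inter> q (Suc n) -` {a (Suc n)}"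
    then have z: "z \<in> Y" "q (Suc n) z = a (Suc n)"
      by auto
    have "q n z = g n (q (Suc n) z)"
      by (rule refine[OF z(1)])
    also have "\<dots> = a n"
      using z(2) a(2)[of n] by simp
    finally show "z \<in> Y \<inter> q n -` {a n}"
      using z(1) by simp
  qed
  moreover have "Y \<inter> q n -` {a n} \<subseteq> Y" for n
    by blast
  ultimately obtain z where "\<And>n. z \<in> Y \<inter> q n -` {a n}"
    by (rule compact_nested_closed[OF Y]) blast
  then show thesis
    using that[of z] by blast
qed

lemma address_map:
  fixes X Y :: "'a::metric_space set"
  assumes Y: "compact Y" and q: "\<And>n. continuous_map (top_of_set Y) (discrete_topology UNIV) (q n)"
    and refine: "\<And>n u. u \<in> X \<Longrightarrow> p n u = g n (p (Suc n) u)" "\<And>n z. z \<in> Y \<Longrightarrow> q n z = g n (q (Suc n) z)"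
    and image: "\<And>n. p n ` X \<subseteq> q n ` Y"
  obtains h where "\<And>u. u \<in> X \<Longrightarrow> h u \<in> Y" "\<And>u n. u \<in> X \<Longrightarrow> q n (h u) = p n u"
proof -
  have "\<exists>z. z \<in> Y \<and> (\<forall>n. q n z = p n u)" if "u \<in> X" for u
  proof -
    have "p n u \<in> q n ` Y" "p n u = g n (p (Suc n) u)" for n
      using image refine(1) that by blast+
    then obtain z where "z \<in> Y" "\<And>n. q n z = p n u"
      using exists_point_with_address[where g = g and a = "\<lambda>n. p n u", OF Y q refine(2)] by blast
    then show ?thesis
      by blast
  qed
  then show ?thesis
    using that by metis
qed

lemma address_map_continuous:
  fixes X Y :: "'a::metric_space set"
  assumes p: "\<And>n. continuous_map (top_of_set X) (discrete_topology UNIV) (p n)"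
    and mesh: "\<And>\<epsilon>. \<epsilon> > 0 \<Longrightarrow> \<exists>n. mesh_less Y (q n) \<epsilon>"
    and h: "\<And>u. u \<in> X \<Longrightarrow> h u \<in> Y" "\<And>u n. u \<in> X \<Longrightarrow> q n (h u) = p n u"
  shows "continuous_on X h"
  unfolding continuous_on_iff
proof (intro ballI allI impI)
  fix u and \<epsilon> :: real assume u: "u \<in> X" and "\<epsilon> > 0"
  then obtain n where n: "mesh_less Y (q n) \<epsilon>"
    using mesh by blast
  have "openin (top_of_set X) {x \<in> X. p n x = p n u}"
    using openin_continuous_map_preimage[OF p, of "{p n u}" n] by simp
  then have "\<exists>\<delta>>0. \<forall>x\<in>X. dist x u < \<delta> \<longrightarrow> x \<in> {x \<in> X. p n x = p n u}"
    using u unfolding openin_euclidean_subtopology_iff by blast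
  then obtain \<delta> where "\<delta> > 0" and \<delta>: "\<And>x. x \<in> X \<Longrightarrow> dist x u < \<delta> \<Longrightarrow> p n x = p n u"
    by blast
  have "dist (h x) (h u) < \<epsilon>" if "x \<in> X" "dist x u < \<delta>" for x
  proof -
    have "q n (h x) = q n (h u)"
      using h(2) that(1) u \<delta>[OF that] by simp
    then show ?thesis
      using n h(1) that(1) u unfolding mesh_less_def by blast
  qed
  then show "\<exists>\<delta>>0. \<forall>x\<in>X. dist x u < \<delta> \<longrightarrow> dist (h x) (h u) < \<epsilon>"
    using \<open>\<delta> > 0\<close> by blast
qed

lemma edge_from_shadows:
  fixes Y :: "'a::metric_space set"
  assumes EY: "closed EY" "EY \<subseteq> Y \<times> Y"
    and refine: "\<And>n z. z \<in> Y \<Longrightarrow> q n z = g n (q (Suc n) z)"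
    and mesh: "\<And>\<epsilon>. \<epsilon> > 0 \<Longrightarrow> \<exists>n. mesh_less Y (q n) \<epsilon>"
    and ab: "a \<in> Y" "b \<in> Y"
    and shadow: "\<And>n. (q n a, q n b) \<in> map_prod (q n) (q n) ` EY"
  shows "(a, b) \<in> EY"
proof -
  have "\<exists>e\<in>EY. q n (fst e) = q n a \<and> q n (snd e) = q n b" for n
    using shadow[of n] by force
  then obtain e where e: "\<And>n. e n \<in> EY" "\<And>n. q n (fst (e n)) = q n a" "\<And>n. q n (snd (e n)) = q n b"
    by metis
  have lim: "c \<longlonglongrightarrow> x" if "x \<in> Y" "\<And>n. c n \<in> Y" "\<And>n. q n (c n) = q n x" for c x
    unfolding lim_sequentially
  proof (intro allI impI)
    fix \<epsilon> :: real assume "\<epsilon> > 0"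
    then obtain N where "mesh_less Y (q N) \<epsilon>"
      using mesh by blast
    then have "mesh_less Y (q n) \<epsilon>" if "N \<le> n" for n
      using mesh_less_later refine that by blast
    then show "\<exists>N. \<forall>n\<ge>N. dist (c n) x < \<epsilon>"
      using that unfolding mesh_less_def by blast
  qed
  have "e n \<in> Y \<times> Y" for n
    using e(1) EY(2) by blast
  then have "fst (e n) \<in> Y" "snd (e n) \<in> Y" for n
    by (simp_all add: mem_Times_iff)
  then have "(\<lambda>n. fst (e n)) \<longlonglongrightarrow> a" "(\<lambda>n. snd (e n)) \<longlonglongrightarrow> b"
    using e(2,3) ab by (auto intro!: lim)
  then have "(\<lambda>n. (fst (e n), snd (e n))) \<longlonglongrightarrow> (a, b)"
    by (rule tendsto_Pair)
  then have "e \<longlonglongrightarrow> (a, b)"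
    by simp
  then show ?thesis
    using closed_sequentially[OF EY(1), of e] e(1) by blast
qed

lemma address_map_edge:
  fixes X Y :: "'a::metric_space set"
  assumes RY: "closed RY" "RY \<subseteq> Y \<times> Y"
    and refine: "\<And>n z. z \<in> Y \<Longrightarrow> q n z = g n (q (Suc n) z)"
    and mesh: "\<And>\<epsilon>. \<epsilon> > 0 \<Longrightarrow> \<exists>n. mesh_less Y (q n) \<epsilon>"
    and h: "\<And>u. u \<in> X \<Longrightarrow> h u \<in> Y" "\<And>u n. u \<in> X \<Longrightarrow> q n (h u) = p n u"
    and shadows: "\<And>n. map_prod (p n) (p n) ` RX \<subseteq> map_prod (q n) (q n) ` RY"
    and uv: "(u, v) \<in> RX" "u \<in> X" "v \<in> X"
  shows "(h u, h v) \<in> RY"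
proof (rule edge_from_shadows[OF RY refine mesh h(1)[OF uv(2)] h(1)[OF uv(3)]])
  fix n
  have "(p n u, p n v) \<in> map_prod (p n) (p n) ` RX"
    using uv(1) by (rule rev_image_eqI) simp
  then have "(p n u, p n v) \<in> map_prod (q n) (q n) ` RY"
    by (rule subsetD[OF shadows[of n]])
  then show "(q n (h u), q n (h v)) \<in> map_prod (q n) (q n) ` RY"
    using h(2)[OF uv(2)] h(2)[OF uv(3)] by simp
qed

lemma map_prod_image_eq_if_inverse:
  assumes "\<And>u v. (u, v) \<in> RX \<Longrightarrow> (h u, h v) \<in> RY" "\<And>z w. (z, w) \<in> RY \<Longrightarrow> (h' z, h' w) \<in> RX"
    "\<And>z w. (z, w) \<in> RY \<Longrightarrow> h (h' z) = z \<and> h (h' w) = w"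
  shows "map_prod h h ` RX = RY"
proof
  show "map_prod h h ` RX \<subseteq> RY"
    using assms(1) by auto
  show "RY \<subseteq> map_prod h h ` RX"
  proof clarify
    fix z w assume "(z, w) \<in> RY"
    then show "(z, w) \<in> map_prod h h ` RX"
      using assms(2,3) by (intro rev_image_eqI[of "(h' z, h' w)"]) auto
  qed
qed

text \<open>Since fibres shrink to points, a point is determined by its sequence of shadows; matching
  shadows therefore give mutually inverse maps, and closedness of the edge sets makes them edge
  preserving.\<close>

lemma inverse_limit_isomorphism:
  fixes X Y :: "'a::metric_space set"
  assumes compact: "compact X" "compact Y"
    and edges: "closed RX" "RX \<subseteq> X \<times> X" "closed RY" "RY \<subseteq> Y \<times> Y"
    and cont: "\<And>n. continuous_map (top_of_set X) (discrete_topology UNIV) (p n)"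
      "\<And>n. continuous_map (top_of_set Y) (discrete_topology UNIV) (q n)"
    and refine: "\<And>n u. u \<in> X \<Longrightarrow> p n u = g n (p (Suc n) u)"
      "\<And>n z. z \<in> Y \<Longrightarrow> q n z = g n (q (Suc n) z)"
    and mesh: "\<And>\<epsilon>. \<epsilon> > 0 \<Longrightarrow> \<exists>n. mesh_less X (p n) \<epsilon>"
      "\<And>\<epsilon>. \<epsilon> > 0 \<Longrightarrow> \<exists>n. mesh_less Y (q n) \<epsilon>"
    and shadows: "\<And>n. p n ` X = q n ` Y"
      "\<And>n. map_prod (p n) (p n) ` RX = map_prod (q n) (q n) ` RY"
  shows "\<exists>h. isomorphism (top_of_set X) RX (top_of_set Y) RY h"
proof -
  obtain h where h: "\<And>u. u \<in> X \<Longrightarrow> h u \<in> Y" "\<And>u n. u \<in> X \<Longrightarrow> q n (h u) = p n u"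
    using address_map[where X = X and Y = Y and p = p and q = q and g = g, OF compact(2) cont(2) refine]
      shadows(1) by blast
  obtain h' where h': "\<And>z. z \<in> Y \<Longrightarrow> h' z \<in> X" "\<And>z n. z \<in> Y \<Longrightarrow> p n (h' z) = q n z"
    using address_map[where X = Y and Y = X and p = q and q = p and g = g, OF compact(1) cont(1) refine(2,1)]
      shadows(1) by blast
  have inverse: "h (h' z) = z" if "z \<in> Y" for z
    by (rule eq_if_same_address[OF mesh(2)]) (use h h' that in auto)
  have "h' (h u) = u" if "u \<in> X" for u
    by (rule eq_if_same_address[OF mesh(1)]) (use h h' that in auto)
  then have "bij_betw h X Y"
    using h(1) h'(1) inverse by (intro bij_betw_byWitness[of X h' h Y]) auto
  moreover have "map_prod h h ` RX = RY"
  proof (rule map_prod_image_eq_if_inverse)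
    have sub: "\<And>n. map_prod (p n) (p n) ` RX \<subseteq> map_prod (q n) (q n) ` RY"
      "\<And>n. map_prod (q n) (q n) ` RY \<subseteq> map_prod (p n) (p n) ` RX"
      using shadows(2) by simp_all
    show "(h u, h v) \<in> RY" if "(u, v) \<in> RX" for u v
    proof (rule address_map_edge[OF edges(3,4) refine(2) mesh(2) h sub(1) that])
      show "u \<in> X" "v \<in> X"
        using that edges(2) by blast+
    qed
    show "(h' z, h' w) \<in> RX" if "(z, w) \<in> RY" for z w
    proof (rule address_map_edge[OF edges(1,2) refine(1) mesh(1) h' sub(2) that])
      show "z \<in> Y" "w \<in> Y"
        using that edges(4) by blast+
    qed
    show "h (h' z) = z \<and> h (h' w) = w" if "(z, w) \<in> RY" for z w
      using inverse that edges(4) by blast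
  qed
  moreover have "continuous_map (top_of_set X) (top_of_set Y) h"
    using address_map_continuous[OF cont(1) mesh(2) h] h(1)
    by (simp add: continuous_map_in_subtopology image_subset_iff)
  ultimately show ?thesis
    unfolding isomorphism_def epimorphism_iff bij_betw_def by auto
qed

section \<open>Amalgamation of finite connected graphs\<close>

text \<open>The subgraph \<open>A\<close> of \<open>D\<close> is replaced by \<open>A1\<close>, which maps confluently onto it. To stay
  within graphs on \<open>nat\<close>, the vertices of \<open>D - A\<close> are moved past \<open>A1\<close> by a shift.\<close>

locale amalgamation =
  fixes D ED A EA A1 EA1 and \<psi> :: "nat \<Rightarrow> nat"
  assumes base: "finite_connected_graph D ED" and A: "A \<subseteq> D" "EA = ED \<inter> A \<times> A"
    and part: "finite_connected_graph A1 EA1"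
    and \<psi>: "confluent (discrete_topology A1) EA1 (discrete_topology A) EA \<psi>"
begin

definition shift :: nat where
  "shift = Suc (Max A1)"

definition glued_vertices :: "nat set" where
  "glued_vertices = A1 \<union> (\<lambda>d. d + shift) ` (D - A)"

definition glued_map :: "nat \<Rightarrow> nat" where
  "glued_map m = (if m \<in> A1 then \<psi> m else m - shift)"

definition glued_edges :: "(nat \<times> nat) set" where
  "glued_edges = {(m, n). m \<in> glued_vertices \<and> n \<in> glued_vertices \<and>
     (if m \<in> A1 \<and> n \<in> A1 then (m, n) \<in> EA1 else (glued_map m, glued_map n) \<in> ED)}"

lemma part_edges: "EA1 \<subseteq> A1 \<times> A1" "\<And>a b. (a, b) \<in> EA1 \<Longrightarrow> (b, a) \<in> EA1"
  using part unfolding finite_connected_graph_iff graph_def by blast+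

lemma base_edge_sym: "(a, b) \<in> ED \<Longrightarrow> (b, a) \<in> ED"
  using base unfolding finite_connected_graph_iff graph_def by blast

lemma \<psi>_image: "\<psi> ` A1 = A"
  and \<psi>_edge_image: "map_prod \<psi> \<psi> ` EA1 = EA"
  using confluent_imp_epimorphism[OF \<psi>] unfolding epimorphism_iff by simp_all

lemma shifted_notin_part: "d + shift \<notin> A1"
proof
  assume "d + shift \<in> A1"
  then have "d + shift \<le> Max A1"
    using part Max_ge by (simp add: finite_connected_graph_iff)
  then show False
    unfolding shift_def by simp
qed

lemma glued_map_part: "m \<in> A1 \<Longrightarrow> glued_map m = \<psi> m"
  unfolding glued_map_def by simp

lemma glued_map_shifted: "glued_map (d + shift) = d"
  unfolding glued_map_def using shifted_notin_part by simp

lemma glued_vertex_outside: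
  assumes "m \<in> glued_vertices" "m \<notin> A1"
  shows "glued_map m \<in> D - A" "m = glued_map m + shift"
  using assms glued_map_shifted unfolding glued_vertices_def by auto

lemma glued_map_in_A_iff:
  assumes "m \<in> glued_vertices"
  shows "glued_map m \<in> A \<longleftrightarrow> m \<in> A1"
  using glued_vertex_outside[OF assms] glued_map_part \<psi>_image by blast

lemma glued_map_image: "glued_map ` glued_vertices = D"
proof
  show "glued_map ` glued_vertices \<subseteq> D"
    using glued_vertex_outside glued_map_part \<psi>_image A(1) by blast
  have "\<psi> c \<in> glued_map ` glued_vertices" if "c \<in> A1" for c
    using that glued_map_part[OF that] unfolding glued_vertices_def by (intro rev_image_eqI) auto
  moreover have "d \<in> glued_map ` glued_vertices" if "d \<in> D - A" for d
    using that glued_map_shifted[of d] unfolding glued_vertices_def by (intro rev_image_eqI) auto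
  ultimately show "D \<subseteq> glued_map ` glued_vertices"
    using \<psi>_image by blast
qed

lemma glued_edge_iff:
  "(m, n) \<in> glued_edges \<longleftrightarrow> m \<in> glued_vertices \<and> n \<in> glued_vertices \<and>
     (if m \<in> A1 \<and> n \<in> A1 then (m, n) \<in> EA1 else (glued_map m, glued_map n) \<in> ED)"
  unfolding glued_edges_def by simp

lemma glued_edges_part: "glued_edges \<inter> A1 \<times> A1 = EA1"
  using glued_edge_iff part_edges(1) unfolding glued_vertices_def by auto

lemma glued_edge_sym: "(m, n) \<in> glued_edges \<Longrightarrow> (n, m) \<in> glued_edges"
  using part_edges(2) base_edge_sym unfolding glued_edge_iff by auto

lemma glued_map_edge:
  assumes "(m, n) \<in> glued_edges"
  shows "(glued_map m, glued_map n) \<in> ED"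
proof (cases "m \<in> A1 \<and> n \<in> A1")
  case True
  then have "(\<psi> m, \<psi> n) \<in> EA"
    using assms glued_edge_iff \<psi>_edge_image by force
  then show ?thesis
    using True A(2) glued_map_part by simp
qed (use assms glued_edge_iff in auto)

lemma glued_graph: "graph glued_vertices glued_edges"
proof -
  have "(m, m) \<in> glued_edges" if m: "m \<in> glued_vertices" for m
  proof (cases "m \<in> A1")
    case True
    then have "(m, m) \<in> EA1"
      using part unfolding finite_connected_graph_iff graph_def by blast
    then show ?thesis
      using m True by (simp add: glued_edge_iff)
  next
    case False
    then have "glued_map m \<in> D"
      using glued_vertex_outside[OF m] by blast
    then have "(glued_map m, glued_map m) \<in> ED"
      using base unfolding finite_connected_graph_iff graph_def by blast
    then show ?thesis
      using m False by (simp add: glued_edge_iff)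
  qed
  moreover have "glued_edges \<subseteq> glued_vertices \<times> glued_vertices"
    unfolding glued_edges_def by auto
  ultimately show ?thesis
    unfolding graph_def using glued_edge_sym by blast
qed

lemma glued_edge_image: "map_prod glued_map glued_map ` glued_edges = ED"
proof
  show "map_prod glued_map glued_map ` glued_edges \<subseteq> ED"
    using glued_map_edge by auto
next
  show "ED \<subseteq> map_prod glued_map glued_map ` glued_edges"
  proof
    fix e assume "e \<in> ED"
    then obtain a b where ab: "e = (a, b)" "(a, b) \<in> ED"
      by (metis surj_pair)
    show "e \<in> map_prod glued_map glued_map ` glued_edges"
    proof (cases "a \<in> A \<and> b \<in> A")
      case True
      then have "(a, b) \<in> map_prod \<psi> \<psi> ` EA1"
        using ab(2) A(2) \<psi>_edge_image by simp
      then obtain c d where cd: "(c, d) \<in> EA1" "a = \<psi> c" "b = \<psi> d"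
        by auto
      then have "c \<in> A1" "d \<in> A1" "(c, d) \<in> glued_edges"
        using part_edges(1) glued_edges_part by blast+
      then show ?thesis
        using ab(1) cd glued_map_part by (intro rev_image_eqI[of "(c, d)"]) auto
    next
      case False
      have "a \<in> D" "b \<in> D"
        using ab(2) base unfolding finite_connected_graph_iff graph_def by blast+
      then obtain m n where mn: "m \<in> glued_vertices" "a = glued_map m" "n \<in> glued_vertices" "b = glued_map n"
        using glued_map_image by (metis imageE)
      then have "\<not> (m \<in> A1 \<and> n \<in> A1)"
        using False glued_map_in_A_iff by blast
      then have "(m, n) \<in> glued_edges"
        using mn ab(2) by (auto simp: glued_edge_iff)
      then show ?thesis
        using ab(1) mn by (intro rev_image_eqI[of "(m, n)"]) auto
    qed
  qed
qed

lemma glued_edgeI: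
  "m \<in> glued_vertices \<Longrightarrow> n \<in> glued_vertices \<Longrightarrow> \<not> (m \<in> A1 \<and> n \<in> A1)
    \<Longrightarrow> (glued_map m, glued_map n) \<in> ED \<Longrightarrow> (m, n) \<in> glued_edges"
  by (auto simp: glued_edge_iff)

lemma glued_map_inj_outside:
  "m \<in> glued_vertices \<Longrightarrow> n \<in> glued_vertices \<Longrightarrow> m \<notin> A1 \<Longrightarrow> n \<notin> A1
    \<Longrightarrow> glued_map m = glued_map n \<Longrightarrow> m = n"
  using glued_vertex_outside(2) by metis

lemma part_subset: "A1 \<subseteq> glued_vertices"
  unfolding glued_vertices_def by blast

lemma glued_part_not_separated:
  assumes S: "A1 \<subseteq> S" "T \<noteq> {}" "S \<union> T = glued_vertices" "S \<inter> T = {}"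
    and no_edge: "\<forall>a\<in>S. \<forall>b\<in>T. (a, b) \<notin> glued_edges"
  shows False
proof (rule edge_image_not_separated[of ED glued_map S T glued_edges])
  show "edge_connected ED (glued_map ` (S \<union> T))"
    using base S(3) glued_map_image by (simp add: finite_connected_graph_iff)
  show "map_prod glued_map glued_map ` glued_edges = ED"
    by (rule glued_edge_image)
  show "glued_edges \<subseteq> (S \<union> T) \<times> (S \<union> T)"
    using glued_graph S(3) unfolding graph_def by blast
  show "S \<noteq> {}"
    using S(1) part by (auto simp: finite_connected_graph_iff)
  have outside: "t \<in> glued_vertices" "t \<notin> A1" if "t \<in> T" for t
    using that S(1,3,4) by blast+
  show "glued_map ` S \<inter> glued_map ` T = {}"
  proof (rule ccontr)
    assume "glued_map ` S \<inter> glued_map ` T \<noteq> {}"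
    then obtain s t where st: "s \<in> S" "t \<in> T" "glued_map s = glued_map t"
      by blast
    moreover have "s \<in> glued_vertices"
      using st(1) S(3) by blast
    moreover have "s \<notin> A1"
      using st glued_map_in_A_iff outside \<open>s \<in> glued_vertices\<close> by metis
    ultimately have "s = t"
      using glued_map_inj_outside outside by blast
    then show False
      using st(1,2) S(4) by blast
  qed
qed (use S(2) no_edge in simp_all)

lemma glued_edge_connected: "edge_connected glued_edges glued_vertices"
  unfolding edge_connected_def
proof clarify
  fix S T assume ne: "S \<noteq> {}" "T \<noteq> {}" and cover: "S \<union> T = glued_vertices"
    and disj: "S \<inter> T = {}" and no_edge: "\<forall>a\<in>S. \<forall>b\<in>T. (a, b) \<notin> glued_edges"
  have "edge_connected glued_edges A1"
    using part glued_edges_part edge_connected_restrict[of A1 A1 glued_edges]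
    by (simp add: finite_connected_graph_iff)
  then have "A1 \<subseteq> S \<or> A1 \<subseteq> T"
    using edge_connected_one_side part_subset cover disj no_edge by blast
  moreover have "\<forall>a\<in>T. \<forall>b\<in>S. (a, b) \<notin> glued_edges"
    using no_edge glued_edge_sym by blast
  ultimately show False
    using glued_part_not_separated[of S T] glued_part_not_separated[of T S] ne cover disj no_edge
    by (auto simp: Un_commute Int_commute)
qed

lemma glued_finite_connected_graph: "finite_connected_graph glued_vertices glued_edges"
proof -
  have "finite glued_vertices" "glued_vertices \<noteq> {}"
    using part base part_subset unfolding glued_vertices_def finite_connected_graph_iff by auto
  then show ?thesis
    using glued_graph glued_edge_connected by (simp add: finite_connected_graph_iff)
qed

lemma part_edge_lift:
  assumes "m \<in> A1" "t \<in> A" "(\<psi> m, t) \<in> EA"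
  obtains L where "m \<in> L" "L \<subseteq> A1" "edge_connected EA1 L" "\<psi> ` L = {\<psi> m, t}"
proof -
  have "\<psi> m \<in> A" "(t, \<psi> m) \<in> EA"
    using assms \<psi>_image A(2) base_edge_sym by auto
  then have pair: "{\<psi> m, t} \<subseteq> A" "edge_connected EA {\<psi> m, t}"
    using assms(2,3) edge_connected_pair by auto
  have "m \<in> topspace (discrete_topology A1) \<inter> \<psi> -` {\<psi> m, t}"
    using assms(1) by simp
  then obtain L where L: "gcomponent (discrete_topology A1) EA1
      (topspace (discrete_topology A1) \<inter> \<psi> -` {\<psi> m, t}) L" "m \<in> L"
    by (rule gcomponent_exists)
  then have "L \<subseteq> A1" "gconnected (discrete_topology A1) EA1 L"
    unfolding gcomponent_def by auto
  moreover have "\<psi> ` L = {\<psi> m, t}"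
    using confluent_component_image[OF \<psi> pair L(1)] .
  ultimately show ?thesis
    using that L(2) by (simp add: gconnected_discrete_topology)
qed

lemma glued_confluent:
  "confluent (discrete_topology glued_vertices) glued_edges (discrete_topology D) ED glued_map"
proof (rule confluent_discreteI)
  show "epimorphism (discrete_topology glued_vertices) glued_edges (discrete_topology D) ED glued_map"
    unfolding epimorphism_iff using glued_map_image glued_edge_image
    by (simp flip: image_subset_iff_funcset)
next
  fix Q m t
  assume Q: "Q \<subseteq> D" "edge_connected ED Q" and m: "m \<in> glued_vertices" "glued_map m \<in> Q"
    and t: "t \<in> Q" "(glued_map m, t) \<in> ED"
  show "\<exists>L. m \<in> L \<and> L \<subseteq> glued_vertices \<inter> glued_map -` Q \<and> edge_connected glued_edges L
    \<and> t \<in> glued_map ` L"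
  proof (cases "m \<in> A1 \<and> t \<in> A")
    case True
    then have "(\<psi> m, t) \<in> EA"
      using t(2) glued_map_part glued_map_in_A_iff[OF m(1)] A(2) by auto
    moreover have "m \<in> A1" "t \<in> A"
      using True by simp_all
    ultimately obtain L where L: "m \<in> L" "L \<subseteq> A1" "edge_connected EA1 L" "\<psi> ` L = {\<psi> m, t}"
      using part_edge_lift by metis
    have "edge_connected glued_edges L"
      using L(2,3) edge_connected_restrict[of L A1 glued_edges] glued_edges_part by auto
    moreover have "glued_map ` L = {glued_map m, t}"
      using L glued_map_part True by (simp add: image_cong[OF refl, of L glued_map \<psi>] subset_iff)
    moreover have "L \<subseteq> glued_vertices"
      using L(2) part_subset by blast
    ultimately show ?thesis
      using L(1) m(2) t(1) by (intro exI[of _ L]) blast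
  next
    case False
    obtain n where n: "n \<in> glued_vertices" "t = glued_map n"
      using t(1) Q(1) glued_map_image by (metis imageE subsetD)
    then have "\<not> (m \<in> A1 \<and> n \<in> A1)"
      using False glued_map_in_A_iff by blast
    then have "(m, n) \<in> glued_edges"
      using glued_edgeI m(1) n t(2) by blast
    then have "edge_connected glued_edges {m, n}"
      using edge_connected_pair glued_edge_sym by metis
    then show ?thesis
      using m n t(1) by (intro exI[of _ "{m, n}"]) auto
  qed
qed

end

section \<open>The Fraisse limit\<close>

locale Fraisse_limit =
  fixes VG :: "'a::metric_space set" and EG :: "('a \<times> 'a) set"
  assumes is_Fraisse_limit: "is_Fraisse_limit VG EG"
begin

abbreviation confluent_onto :: "nat set \<Rightarrow> (nat \<times> nat) set \<Rightarrow> ('a \<Rightarrow> nat) \<Rightarrow> bool" where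
  "confluent_onto D ED P \<equiv> confluent (top_of_set VG) EG (discrete_topology D) ED P"

lemma topological_graph_VG: "topological_graph VG EG"
  using is_Fraisse_limit unfolding is_Fraisse_limit_def by blast

lemma edges_subset: "EG \<subseteq> VG \<times> VG"
  and edge_refl: "v \<in> VG \<Longrightarrow> (v, v) \<in> EG"
  using topological_graph_VG unfolding topological_graph_def graph_def by blast+

lemma compact_VG: "compact VG"
  and closed_EG: "closed EG"
  using topological_graph_VG unfolding topological_graph_def by blast+

lemma exists_confluent_onto:
  assumes "finite_connected_graph D ED"
  obtains P where "confluent_onto D ED P"
  using is_Fraisse_limit assms unfolding is_Fraisse_limit_def by blast

lemma confluent_onto_lift:
  assumes "finite_connected_graph D ED" "finite_connected_graph D' ED'" "confluent_onto D ED P"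
    "confluent (discrete_topology D') ED' (discrete_topology D) ED g"
  obtains P' where "confluent_onto D' ED' P'" "\<And>u. u \<in> VG \<Longrightarrow> P u = g (P' u)"
proof -
  have "\<exists>P'. confluent_onto D' ED' P' \<and> (\<forall>u\<in>VG. P u = g (P' u))"
    using is_Fraisse_limit assms unfolding is_Fraisse_limit_def by blast
  then show ?thesis
    using that by blast
qed

lemma exists_fine_confluent_onto:
  assumes "\<epsilon> > 0"
  obtains D ED P where "finite_connected_graph D ED" "confluent_onto D ED P" "mesh_less VG P \<epsilon>"
proof -
  obtain D ED P where P: "finite_connected_graph D ED" "confluent_onto D ED P"
    "\<forall>a\<in>D. diameter (VG \<inter> P -` {a}) < \<epsilon>"
    using is_Fraisse_limit assms unfolding is_Fraisse_limit_def by blast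
  moreover have "P ` VG = D"
    using confluent_imp_epimorphism[OF P(2)] unfolding epimorphism_def by simp
  ultimately have "mesh_less VG P \<epsilon>"
    using compact_imp_bounded[OF compact_VG] by (intro mesh_less_diameter) auto
  then show ?thesis
    using that P(1,2) by blast
qed

lemma confluent_onto_image: "confluent_onto D ED P \<Longrightarrow> P ` VG = D"
  using confluent_imp_epimorphism unfolding epimorphism_def by fastforce

lemma confluent_onto_edge_image: "confluent_onto D ED P \<Longrightarrow> map_prod P P ` EG = ED"
  using confluent_imp_epimorphism unfolding epimorphism_iff by blast

lemma confluent_onto_edge:
  assumes "confluent_onto D ED P" "(u, v) \<in> EG"
  shows "(P u, P v) \<in> ED"
proof -
  have "map_prod P P (u, v) \<in> map_prod P P ` EG"
    using assms(2) by (rule imageI)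
  then show ?thesis
    using confluent_onto_edge_image[OF assms(1)] by simp
qed

lemma confluent_onto_continuous:
  "confluent_onto D ED P \<Longrightarrow> continuous_map (top_of_set VG) (discrete_topology UNIV) P"
  using confluent_imp_epimorphism continuous_map_discrete_UNIV unfolding epimorphism_def by blast

lemma confluent_onto_closed_preimage: "confluent_onto D ED P \<Longrightarrow> closed (VG \<inter> P -` B)"
  using closed_preimage_locally_constant[OF compact_VG confluent_onto_continuous] .

text \<open>A clopen splitting of the vertex set would, on a fine enough confluent image, split the
  connected finite graph, because fibres of small diameter cannot meet both halves.\<close>

lemma gconnected_VG: "gconnected (top_of_set VG) EG VG"
proof (rule ccontr)
  assume "\<not> gconnected (top_of_set VG) EG VG"
  then obtain S T where "closedin (subtopology (top_of_set VG) VG) S"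
    "closedin (subtopology (top_of_set VG) VG) T"
    and ne: "S \<noteq> {}" "T \<noteq> {}" and cover: "S \<union> T = VG" and disj: "S \<inter> T = {}"
    and no_edge: "\<forall>a\<in>S. \<forall>b\<in>T. (a, b) \<notin> EG"
    unfolding gconnected_def by blast
  then have S: "closedin (top_of_set VG) S" and T: "closedin (top_of_set VG) T"
    by (simp_all add: subtopology_subtopology)
  have "{u \<in> VG. (u \<in> S) = b} = VG - (if b then T else S)" for b
    using cover disj by auto
  then have "continuous_map (top_of_set VG) (discrete_topology UNIV) (\<lambda>u. u \<in> S)"
    unfolding continuous_map_discrete_UNIV_iff using S T by (simp add: openin_diff)
  then obtain \<delta> where "\<delta> > 0" and \<delta>: "\<And>u v. u \<in> VG \<Longrightarrow> v \<in> VG \<Longrightarrow> dist u v < \<delta> \<Longrightarrow> u \<in> S \<longleftrightarrow> v \<in> S"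
    using locally_constant_uniformly[OF compact_VG] by metis
  obtain D ED P where P: "finite_connected_graph D ED" "confluent_onto D ED P" "mesh_less VG P \<delta>"
    using exists_fine_confluent_onto[OF \<open>\<delta> > 0\<close>] by metis
  have "P s \<noteq> P t" if st: "s \<in> S" "t \<in> T" for s t
  proof
    assume "P s = P t"
    moreover have "s \<in> VG" "t \<in> VG"
      using st cover by auto
    ultimately have "dist s t < \<delta>"
      using P(3) unfolding mesh_less_def by blast
    then have "t \<in> S"
      using \<delta>[OF \<open>s \<in> VG\<close> \<open>t \<in> VG\<close>] st(1) by blast
    then show False
      using st(2) disj by blast
  qed
  then have "P ` S \<inter> P ` T = {}"
    by blast
  then show False
    using edge_image_not_separated[of ED P S T EG] P(1) confluent_onto_image[OF P(2)]
      confluent_onto_edge_image[OF P(2)] edges_subset cover ne no_edge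
    by (simp add: finite_connected_graph_iff)
qed

definition component_over :: "'a set \<Rightarrow> ('a \<Rightarrow> nat) \<Rightarrow> nat set \<Rightarrow> (nat \<times> nat) set
    \<Rightarrow> nat set \<Rightarrow> (nat \<times> nat) set \<Rightarrow> bool" where
  "component_over X P D ED A EA \<longleftrightarrow> confluent_onto D ED P \<and> finite_connected_graph D ED
     \<and> A \<subseteq> D \<and> EA = ED \<inter> A \<times> A \<and> finite_connected_graph A EA
     \<and> gcomponent (top_of_set VG) EG (VG \<inter> P -` A) X"

context
  fixes X P D ED A EA
  assumes component_over: "component_over X P D ED A EA"
begin

lemma component_over_confluent: "confluent_onto D ED P"
  and component_over_graph: "finite_connected_graph D ED"
  and component_over_subgraph: "A \<subseteq> D" "EA = ED \<inter> A \<times> A" "finite_connected_graph A EA"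
  and component_over_gcomponent: "gcomponent (top_of_set VG) EG (VG \<inter> P -` A) X"
  using component_over unfolding component_over_def by blast+

lemma component_over_subset: "X \<subseteq> VG \<inter> P -` A"
  using component_over_gcomponent unfolding gcomponent_def by blast

lemma component_over_edge_connected: "edge_connected ED A"
  using component_over_subgraph edge_connected_restrict[of A A ED]
  by (simp add: finite_connected_graph_iff)

lemma component_over_image: "P ` X = A"
  using confluent_component_image[OF component_over_confluent component_over_subgraph(1)
      component_over_edge_connected] component_over_gcomponent by simp

lemma component_over_closed: "closed X"
proof -
  have "closedin (top_of_set VG) (VG \<inter> P -` A)"
    using confluent_onto_closed_preimage[OF component_over_confluent] by (simp add: closed_subset)
  then have "closedin (top_of_set VG) X"
    by (rule gcomponent_closedin[OF component_over_gcomponent])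
  then show ?thesis
    using closedin_closed_trans compact_imp_closed[OF compact_VG] by blast
qed

lemma component_over_continuous: "continuous_map (top_of_set X) (discrete_topology UNIV) P"
proof -
  have "top_of_set X = subtopology (top_of_set VG) X"
    using component_over_subset by (simp add: subtopology_subtopology Int_absorb1)
  then show ?thesis
    using confluent_onto_continuous[OF component_over_confluent] continuous_map_from_subtopology
    by metis
qed

lemma component_over_piece:
  assumes "v \<in> X" "Q \<subseteq> A" "edge_connected ED Q" "P v \<in> Q"
  obtains L where "v \<in> L" "L \<subseteq> X" "P ` L = Q" "gconnected (top_of_set VG) EG L"
proof -
  have "v \<in> VG \<inter> P -` Q"
    using assms(1,4) component_over_subset by blast
  then obtain L where L: "gcomponent (top_of_set VG) EG (VG \<inter> P -` Q) L" "v \<in> L"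
    by (rule gcomponent_exists)
  have "P ` L = Q"
    using confluent_component_image[OF component_over_confluent _ assms(3)] L(1)
      assms(2) component_over_subgraph(1) by simp
  moreover have "L \<subseteq> X"
  proof (rule gcomponent_maximal[OF component_over_gcomponent])
    show "L \<subseteq> VG \<inter> P -` A" "gconnected (top_of_set VG) EG L"
      using L(1) assms(2) unfolding gcomponent_def by blast+
    show "L \<inter> X \<noteq> {}"
      using L(2) assms(1) by blast
  qed
  ultimately show ?thesis
    using that L unfolding gcomponent_def by blast
qed

lemma component_over_edge_image: "map_prod P P ` (EG \<inter> X \<times> X) = EA"
proof
  show "map_prod P P ` (EG \<inter> X \<times> X) \<subseteq> EA"
    using confluent_onto_edge[OF component_over_confluent] component_over_subset
      component_over_subgraph(2) by auto
next
  show "EA \<subseteq> map_prod P P ` (EG \<inter> X \<times> X)"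
  proof clarify
    fix a b assume "(a, b) \<in> EA"
    then have ab: "a \<in> A" "b \<in> A" "(a, b) \<in> ED" "(b, a) \<in> ED"
      using component_over_subgraph(2) component_over_graph
      unfolding finite_connected_graph_iff graph_def by blast+
    then obtain v where "v \<in> X" "P v = a"
      using component_over_image by blast
    moreover have "{a, b} \<subseteq> A" "edge_connected ED {a, b}"
      using ab edge_connected_pair by simp_all
    ultimately obtain L where L: "v \<in> L" "L \<subseteq> X" "P ` L = {a, b}" "gconnected (top_of_set VG) EG L"
      using component_over_piece[of v "{a, b}"] by (metis insertI1)
    have "\<exists>x\<in>L. \<exists>y\<in>L. (x, y) \<in> EG \<and> P x = a \<and> P y = b"
    proof (cases "a = b")
      case True
      then show ?thesis
        using L(1,2) \<open>P v = a\<close> edge_refl component_over_subset by blast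
    next
      case False
      have "L \<subseteq> topspace (top_of_set VG)"
        using L(2) component_over_subset by auto
      then show ?thesis
        using gconnected_edge_between_fibres[OF L(4) _ confluent_onto_continuous[OF component_over_confluent]
            L(3) False] by metis
    qed
    then obtain x y where "x \<in> L" "y \<in> L" "(x, y) \<in> EG" "P x = a" "P y = b"
      by blast
    then show "(a, b) \<in> map_prod P P ` (EG \<inter> X \<times> X)"
      using L(2) by (intro rev_image_eqI[of "(x, y)"]) auto
  qed
qed

end

text \<open>The invariant of the back-and-forth construction.\<close>

definition matched :: "'a set \<Rightarrow> 'a set \<Rightarrow> ('a \<Rightarrow> nat) \<Rightarrow> ('a \<Rightarrow> nat) \<Rightarrow> bool" where
  "matched X Y P Q \<longleftrightarrow>
     (\<exists>D ED D' ED' A EA. component_over X P D ED A EA \<and> component_over Y Q D' ED' A EA)"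

lemma matched_sym: "matched X Y P Q \<Longrightarrow> matched Y X Q P"
  unfolding matched_def by blast

lemma matched_image: "matched X Y P Q \<Longrightarrow> P ` X = Q ` Y"
  unfolding matched_def using component_over_image by metis

lemma matched_edge_image:
  "matched X Y P Q \<Longrightarrow> map_prod P P ` (EG \<inter> X \<times> X) = map_prod Q Q ` (EG \<inter> Y \<times> Y)"
  unfolding matched_def using component_over_edge_image by metis

context
  fixes X P D ED A EA C EC k \<psi>
  assumes component_over: "component_over X P D ED A EA"
    and k: "confluent_onto C EC k" "finite_connected_graph C EC"
    and factor: "\<And>u. u \<in> VG \<Longrightarrow> P u = \<psi> (k u)"
begin

lemma factor_image: "\<psi> ` k ` X = A"
proof -
  have "\<psi> ` k ` X = P ` X"
    unfolding image_image using factor component_over_subset[OF component_over]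
    by (intro image_cong) auto
  then show ?thesis
    using component_over_image[OF component_over] by simp
qed

lemma factor_edge_connected_image:
  assumes "L \<subseteq> X" "gconnected (top_of_set VG) EG L"
  shows "edge_connected (EC \<inter> k ` X \<times> k ` X) (k ` L)"
proof -
  have "continuous_map (top_of_set VG) (discrete_topology C) k"
    using confluent_imp_epimorphism[OF k(1)] unfolding epimorphism_def by blast
  then have "edge_connected EC (k ` L)"
    by (rule edge_connected_image[OF _ _ assms(2)])
      (use confluent_onto_edge[OF k(1)] assms(1) component_over_subset[OF component_over] in auto)
  then show ?thesis
    using assms(1) by (simp add: edge_connected_restrict image_mono)
qed

lemma factor_component_over: "component_over X k C EC (k ` X) (EC \<inter> k ` X \<times> k ` X)"
proof -
  have X: "X \<subseteq> VG" "gconnected (top_of_set VG) EG X"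
    using component_over_subset[OF component_over] component_over_gcomponent[OF component_over]
    unfolding gcomponent_def by blast+
  have kX: "k ` X \<subseteq> C"
    using confluent_onto_image[OF k(1)] X(1) by blast
  have "k ` X \<noteq> {}"
    using factor_image component_over_subgraph(3)[OF component_over]
    by (auto simp: finite_connected_graph_iff)
  moreover have "edge_connected EC (k ` X)"
    using factor_edge_connected_image[OF order_refl X(2)]
    by (simp add: edge_connected_restrict)
  ultimately have graph: "finite_connected_graph (k ` X) (EC \<inter> k ` X \<times> k ` X)"
    by (rule finite_connected_graph_restrict[OF k(2) kX])
  have "VG \<inter> k -` k ` X \<subseteq> VG \<inter> P -` A"
    using factor factor_image by auto
  then have "gcomponent (top_of_set VG) EG (VG \<inter> k -` k ` X) X"
    by (rule gcomponent_subset[OF component_over_gcomponent[OF component_over], rotated])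
      (use X(1) in blast)
  then show ?thesis
    unfolding component_over_def using k kX graph by blast
qed

lemma factor_edge_image: "map_prod \<psi> \<psi> ` (EC \<inter> k ` X \<times> k ` X) = EA"
proof
  show "map_prod \<psi> \<psi> ` (EC \<inter> k ` X \<times> k ` X) \<subseteq> EA"
  proof
    fix e assume "e \<in> map_prod \<psi> \<psi> ` (EC \<inter> k ` X \<times> k ` X)"
    then obtain p where p: "p \<in> EC \<inter> k ` X \<times> k ` X" "e = map_prod \<psi> \<psi> p"
      by (rule imageE)
    obtain c c' where "p = (c, c')"
      by fastforce
    then have cc: "(c, c') \<in> EC" "c \<in> k ` X" "c' \<in> k ` X" "e = (\<psi> c, \<psi> c')"
      using p by auto
    obtain w w' where w: "(w, w') \<in> EG" "c = k w" "c' = k w'"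
      using confluent_onto_edge_image[OF k(1)] cc(1) by force
    then have "w \<in> VG" "w' \<in> VG"
      using edges_subset by auto
    moreover have "(P w, P w') \<in> ED"
      using confluent_onto_edge[OF component_over_confluent[OF component_over] w(1)] .
    ultimately have "(\<psi> c, \<psi> c') \<in> ED"
      using factor w(2,3) by simp
    moreover have "\<psi> c \<in> A" "\<psi> c' \<in> A"
      using cc(2,3) factor_image by blast+
    ultimately show "e \<in> EA"
      using cc(4) component_over_subgraph(2)[OF component_over] by simp
  qed
next
  have "map_prod \<psi> \<psi> (map_prod k k e) = map_prod P P e" if "e \<in> EG \<inter> X \<times> X" for e
    using that factor component_over_subset[OF component_over] by (cases e) auto
  then have "map_prod P P ` (EG \<inter> X \<times> X) = map_prod \<psi> \<psi> ` map_prod k k ` (EG \<inter> X \<times> X)"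
    unfolding image_image by (intro image_cong) simp_all
  also have "\<dots> \<subseteq> map_prod \<psi> \<psi> ` (EC \<inter> k ` X \<times> k ` X)"
    using confluent_onto_edge[OF k(1)] by (intro image_mono) auto
  finally show "EA \<subseteq> map_prod \<psi> \<psi> ` (EC \<inter> k ` X \<times> k ` X)"
    using component_over_edge_image[OF component_over] by simp
qed

lemma factor_confluent:
  "confluent (discrete_topology (k ` X)) (EC \<inter> k ` X \<times> k ` X) (discrete_topology A) EA \<psi>"
proof (rule confluent_discreteI)
  show "epimorphism (discrete_topology (k ` X)) (EC \<inter> k ` X \<times> k ` X) (discrete_topology A) EA \<psi>"
    unfolding epimorphism_iff using factor_image factor_edge_image
    by (simp flip: image_subset_iff_funcset)
next
  fix Q m t
  assume Q: "Q \<subseteq> A" "edge_connected EA Q" and m: "m \<in> k ` X" "\<psi> m \<in> Q" and "t \<in> Q"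
  obtain v where v: "v \<in> X" "m = k v"
    using m(1) by blast
  have "edge_connected ED Q"
    using edge_connected_restrict[OF Q(1), of ED] Q(2) component_over_subgraph(2)[OF component_over]
    by simp
  moreover have "P v \<in> Q"
    using v m(2) factor component_over_subset[OF component_over] by auto
  ultimately obtain L where L: "v \<in> L" "L \<subseteq> X" "P ` L = Q" "gconnected (top_of_set VG) EG L"
    using component_over_piece[OF component_over v(1) Q(1)] by blast
  have "\<psi> ` k ` L = P ` L"
    unfolding image_image using L(2) factor component_over_subset[OF component_over]
    by (intro image_cong) auto
  then have image: "\<psi> ` k ` L = Q"
    using L(3) by simp
  then have "k ` L \<subseteq> k ` X \<inter> \<psi> -` Q" "t \<in> \<psi> ` k ` L"
    using L(2) \<open>t \<in> Q\<close> by blast+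
  moreover have "edge_connected (EC \<inter> k ` X \<times> k ` X) (k ` L)"
    by (rule factor_edge_connected_image[OF L(2,4)])
  moreover have "m \<in> k ` L"
    using L(1) v(2) by blast
  ultimately show "\<exists>L'. m \<in> L' \<and> L' \<subseteq> k ` X \<inter> \<psi> -` Q
      \<and> edge_connected (EC \<inter> k ` X \<times> k ` X) L' \<and> t \<in> \<psi> ` L'"
    by (intro exI[of _ "k ` L"]) simp
qed

end

lemma exists_fine_refinement:
  assumes "confluent_onto D ED P" "\<epsilon> > 0"
  obtains C EC k \<psi> where "finite_connected_graph C EC" "confluent_onto C EC k" "mesh_less VG k \<epsilon>"
    "\<And>u. u \<in> VG \<Longrightarrow> P u = \<psi> (k u)"
proof -
  obtain \<delta> where "\<delta> > 0" and \<delta>: "\<And>u v. u \<in> VG \<Longrightarrow> v \<in> VG \<Longrightarrow> dist u v < \<delta> \<Longrightarrow> P u = P v"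
    using locally_constant_uniformly[OF compact_VG confluent_onto_continuous[OF assms(1)]] by metis
  obtain C EC k where k: "finite_connected_graph C EC" "confluent_onto C EC k"
    "mesh_less VG k (min \<epsilon> \<delta>)"
    using exists_fine_confluent_onto[of "min \<epsilon> \<delta>"] \<open>\<delta> > 0\<close> assms(2) by auto
  have "P u = P v" if "u \<in> VG" "v \<in> VG" "k u = k v" for u v
    using \<delta>[OF that(1,2)] k(3) that unfolding mesh_less_def by fastforce
  then obtain \<psi> where "\<And>u. u \<in> VG \<Longrightarrow> P u = \<psi> (k u)"
    using factor_through[of VG k P] by blast
  moreover have "mesh_less VG k \<epsilon>"
    using mesh_less_mono[OF k(3) min.cobounded1] .
  ultimately show ?thesis
    using that k(1,2) by blast
qed

lemma component_over_amalgamation: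
  assumes Y: "component_over Y Q D ED A EA" and A1: "finite_connected_graph A1 EA1"
    and conf: "confluent (discrete_topology A1) EA1 (discrete_topology A) EA \<psi>"
  obtains Q' D' ED' where "component_over Y Q' D' ED' A1 EA1" "\<And>u. u \<in> Y \<Longrightarrow> Q u = \<psi> (Q' u)"
proof -
  interpret amalgamation D ED A EA A1 EA1 \<psi>
    using component_over_graph[OF Y] component_over_subgraph(1,2)[OF Y] A1 conf by unfold_locales
  obtain Q' where Q': "confluent_onto glued_vertices glued_edges Q'"
    "\<And>u. u \<in> VG \<Longrightarrow> Q u = glued_map (Q' u)"
    using confluent_onto_lift[OF component_over_graph[OF Y] glued_finite_connected_graph
        component_over_confluent[OF Y] glued_confluent] by metis
  have "Q' u \<in> A1 \<longleftrightarrow> Q u \<in> A" if "u \<in> VG" for u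
  proof -
    have "Q' u \<in> glued_vertices"
      using confluent_onto_image[OF Q'(1)] that by blast
    then show ?thesis
      using glued_map_in_A_iff Q'(2)[OF that] by simp
  qed
  then have "VG \<inter> Q' -` A1 = VG \<inter> Q -` A"
    by blast
  then have Y1: "component_over Y Q' glued_vertices glued_edges A1 EA1"
    using Q'(1) glued_finite_connected_graph part_subset glued_edges_part A1
      component_over_gcomponent[OF Y] unfolding component_over_def by simp
  moreover have "Q u = \<psi> (Q' u)" if "u \<in> Y" for u
  proof -
    have "u \<in> VG" "Q' u \<in> A1"
      using that component_over_subset[OF Y1] by blast+
    then show ?thesis
      using Q'(2) glued_map_part by simp
  qed
  ultimately show ?thesis
    using that by blast
qed

text \<open>The map on the first component is refined through a map with small fibres; the map on
  the second one follows by the amalgamation property (2) of the Fraisse limit.\<close>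

lemma matched_refine:
  assumes "matched X Y P Q" "\<epsilon> > 0"
  obtains P' Q' g where "matched X Y P' Q'" "\<And>u. u \<in> X \<Longrightarrow> P u = g (P' u)"
    "\<And>u. u \<in> Y \<Longrightarrow> Q u = g (Q' u)" "mesh_less X P' \<epsilon>"
proof -
  obtain D ED D' ED' A EA where X: "component_over X P D ED A EA"
    and Y: "component_over Y Q D' ED' A EA"
    using assms(1) unfolding matched_def by blast
  obtain C EC k \<psi> where k: "finite_connected_graph C EC" "confluent_onto C EC k" "mesh_less VG k \<epsilon>"
    and factor: "\<And>u. u \<in> VG \<Longrightarrow> P u = \<psi> (k u)"
    using exists_fine_refinement[OF component_over_confluent[OF X] assms(2)] by blast
  have X1: "component_over X k C EC (k ` X) (EC \<inter> k ` X \<times> k ` X)"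
    by (rule factor_component_over[OF X k(2,1) factor])
  obtain Q' D'' ED'' where Y1: "component_over Y Q' D'' ED'' (k ` X) (EC \<inter> k ` X \<times> k ` X)"
    and Q': "\<And>u. u \<in> Y \<Longrightarrow> Q u = \<psi> (Q' u)"
    by (rule component_over_amalgamation[OF Y component_over_subgraph(3)[OF X1]
        factor_confluent[OF X k(2,1) factor]]) auto
  show ?thesis
  proof
    show "matched X Y k Q'"
      unfolding matched_def using X1 Y1 by blast
    show "P u = \<psi> (k u)" if "u \<in> X" for u
      using factor that component_over_subset[OF X] by blast
    show "Q u = \<psi> (Q' u)" if "u \<in> Y" for u
      using Q' that .
    show "mesh_less X k \<epsilon>"
      using mesh_less_subset[OF k(3)] component_over_subset[OF X] by blast
  qed
qed

lemma matched_refine_both: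
  assumes "matched X Y P Q" "\<epsilon> > 0"
  obtains P' Q' g where "matched X Y P' Q'" "\<And>u. u \<in> X \<Longrightarrow> P u = g (P' u)"
    "\<And>u. u \<in> Y \<Longrightarrow> Q u = g (Q' u)" "mesh_less X P' \<epsilon>" "mesh_less Y Q' \<epsilon>"
proof -
  obtain P1 Q1 g1 where 1: "matched X Y P1 Q1" "\<And>u. u \<in> X \<Longrightarrow> P u = g1 (P1 u)"
    "\<And>u. u \<in> Y \<Longrightarrow> Q u = g1 (Q1 u)" "mesh_less X P1 \<epsilon>"
    using matched_refine[OF assms] by blast
  obtain Q2 P2 g2 where 2: "matched Y X Q2 P2" "\<And>u. u \<in> Y \<Longrightarrow> Q1 u = g2 (Q2 u)"
    "\<And>u. u \<in> X \<Longrightarrow> P1 u = g2 (P2 u)" "mesh_less Y Q2 \<epsilon>"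
    using matched_refine[OF matched_sym[OF 1(1)] assms(2)] by blast
  show ?thesis
  proof
    show "matched X Y P2 Q2"
      using matched_sym[OF 2(1)] .
    show "P u = (g1 \<circ> g2) (P2 u)" if "u \<in> X" for u
      using 1(2) 2(3) that by simp
    show "Q u = (g1 \<circ> g2) (Q2 u)" if "u \<in> Y" for u
      using 1(3) 2(2) that by simp
    show "mesh_less X P2 \<epsilon>"
      by (rule mesh_less_refine[OF 1(4)]) (rule 2(3))
    show "mesh_less Y Q2 \<epsilon>"
      by (rule 2(4))
  qed
qed

lemma matched_sequence:
  assumes "matched X Y P Q"
  obtains p q g where "\<And>n. matched X Y (p n) (q n)"
    "\<And>n u. u \<in> X \<Longrightarrow> p n u = g n (p (Suc n) u)" "\<And>n u. u \<in> Y \<Longrightarrow> q n u = g n (q (Suc n) u)"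
    "\<And>\<epsilon>. \<epsilon> > 0 \<Longrightarrow> \<exists>n. mesh_less X (p n) \<epsilon>" "\<And>\<epsilon>. \<epsilon> > 0 \<Longrightarrow> \<exists>n. mesh_less Y (q n) \<epsilon>"
proof -
  define step where "step n s s' \<longleftrightarrow>
      (\<exists>g. (\<forall>u\<in>X. fst s u = g (fst s' u)) \<and> (\<forall>u\<in>Y. snd s u = g (snd s' u)))
      \<and> mesh_less X (fst s') (inverse (Suc n)) \<and> mesh_less Y (snd s') (inverse (Suc n))"
    for n and s s' :: "('a \<Rightarrow> nat) \<times> ('a \<Rightarrow> nat)"
  have "\<exists>F. \<forall>n. matched X Y (fst (F n)) (snd (F n)) \<and> step n (F n) (F (Suc n))"
  proof (rule dependent_nat_choice)
    show "\<exists>s. matched X Y (fst s) (snd s)"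
      using assms by auto
  next
    fix s n assume s: "matched X Y (fst s) (snd s)"
    obtain P' Q' g where "matched X Y P' Q'" "\<And>u. u \<in> X \<Longrightarrow> fst s u = g (P' u)"
      "\<And>u. u \<in> Y \<Longrightarrow> snd s u = g (Q' u)" "mesh_less X P' (inverse (Suc n))"
      "mesh_less Y Q' (inverse (Suc n))"
      using matched_refine_both[OF s, of "inverse (Suc n)"] by auto
    then show "\<exists>s'. matched X Y (fst s') (snd s') \<and> step n s s'"
      unfolding step_def by (intro exI[of _ "(P', Q')"]) auto
  qed
  then obtain F where F: "\<And>n. matched X Y (fst (F n)) (snd (F n))" "\<And>n. step n (F n) (F (Suc n))"
    by blast
  then obtain g where g: "\<And>n. (\<forall>u\<in>X. fst (F n) u = g n (fst (F (Suc n)) u))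
      \<and> (\<forall>u\<in>Y. snd (F n) u = g n (snd (F (Suc n)) u))"
    unfolding step_def by metis
  show ?thesis
  proof
    show "matched X Y (fst (F n)) (snd (F n))" for n
      by (rule F(1))
    show "fst (F n) u = g n (fst (F (Suc n)) u)" if "u \<in> X" for n u
      using g that by blast
    show "snd (F n) u = g n (snd (F (Suc n)) u)" if "u \<in> Y" for n u
      using g that by blast
    have meshes: "mesh_less X (fst (F (Suc n))) (inverse (Suc n))"
      "mesh_less Y (snd (F (Suc n))) (inverse (Suc n))" for n
      using F(2)[of n] unfolding step_def by blast+
    show "\<exists>n. mesh_less X (fst (F n)) \<epsilon>" if "\<epsilon> > 0" for \<epsilon>
      by (rule mesh_less_vanishing[where p = "\<lambda>n. fst (F n)", OF meshes(1) that]) blast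
    show "\<exists>n. mesh_less Y (snd (F n)) \<epsilon>" if "\<epsilon> > 0" for \<epsilon>
      by (rule mesh_less_vanishing[where p = "\<lambda>n. snd (F n)", OF meshes(2) that]) blast
  qed
qed

lemma matched_isomorphism:
  assumes "matched X VG P Q"
  shows "\<exists>h. isomorphism (top_of_set X) (EG \<inter> X \<times> X) (top_of_set VG) EG h"
proof -
  obtain p q g where seq: "\<And>n. matched X VG (p n) (q n)"
    "\<And>n u. u \<in> X \<Longrightarrow> p n u = g n (p (Suc n) u)" "\<And>n u. u \<in> VG \<Longrightarrow> q n u = g n (q (Suc n) u)"
    "\<And>\<epsilon>. \<epsilon> > 0 \<Longrightarrow> \<exists>n. mesh_less X (p n) \<epsilon>" "\<And>\<epsilon>. \<epsilon> > 0 \<Longrightarrow> \<exists>n. mesh_less VG (q n) \<epsilon>"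
    using matched_sequence[OF assms] by blast
  have cont: "continuous_map (top_of_set X) (discrete_topology UNIV) (p n)"
    "continuous_map (top_of_set VG) (discrete_topology UNIV) (q n)" for n
    using seq(1)[of n] component_over_continuous unfolding matched_def by blast+
  obtain D ED A EA where X: "component_over X P D ED A EA"
    using assms unfolding matched_def by blast
  have "compact X"
    using compact_Int_closed[OF compact_VG component_over_closed[OF X]] component_over_subset[OF X]
    by (simp add: Int_absorb1 le_infE)
  moreover have "closed (EG \<inter> X \<times> X)"
    using closed_EG component_over_closed[OF X] by (simp add: closed_Int closed_Times)
  moreover have "map_prod (p n) (p n) ` (EG \<inter> X \<times> X) = map_prod (q n) (q n) ` EG" for n
    using matched_edge_image[OF seq(1)] edges_subset by (simp add: Int_absorb2)
  ultimately show ?thesis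
    using inverse_limit_isomorphism[OF _ compact_VG _ _ closed_EG edges_subset cont seq(2-5)]
      matched_image[OF seq(1)] by blast
qed

lemma gcomponent_VG: "gcomponent (top_of_set VG) EG VG VG"
  using gconnected_VG unfolding gcomponent_def by blast

text \<open>The neighbourhood is the component through \<open>x\<close> of a small fibre of a fine confluent map;
  over the one-vertex graph it is matched with the whole vertex set.\<close>

lemma self_similar_neighbourhood:
  assumes x: "x \<in> VG" and W: "openin (top_of_set VG) W" "x \<in> W"
  obtains V where "x \<in> V" "V \<subseteq> W" "topological_graph V (EG \<inter> V \<times> V)"
    "\<exists>h. isomorphism (top_of_set V) (EG \<inter> V \<times> V) (top_of_set VG) EG h"
proof -
  obtain \<epsilon> where "\<epsilon> > 0" and \<epsilon>: "\<And>u. u \<in> VG \<Longrightarrow> dist u x < \<epsilon> \<Longrightarrow> u \<in> W"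
    using W unfolding openin_euclidean_subtopology_iff by blast
  obtain D ED P where P: "finite_connected_graph D ED" "confluent_onto D ED P" "mesh_less VG P \<epsilon>"
    using exists_fine_confluent_onto[OF \<open>\<epsilon> > 0\<close>] by blast
  define a where "a = P x"
  obtain X where X: "gcomponent (top_of_set VG) EG (VG \<inter> P -` {a}) X" "x \<in> X"
    using gcomponent_exists[of x "VG \<inter> P -` {a}"] x unfolding a_def by blast
  have "a \<in> D"
    using confluent_onto_image[OF P(2)] x unfolding a_def by blast
  then have "{(a, a)} = ED \<inter> {a} \<times> {a}"
    using P(1) unfolding finite_connected_graph_iff graph_def by blast
  then have X_over: "component_over X P D ED {a} {(a, a)}"
    unfolding component_over_def using P(1,2) \<open>a \<in> D\<close> X(1) finite_connected_graph_singleton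
    by simp
  obtain f where f: "confluent_onto {a} {(a, a)} f"
    using exists_confluent_onto[OF finite_connected_graph_singleton] by blast
  then have "VG \<inter> f -` {a} = VG"
    using confluent_onto_image by blast
  then have "component_over VG f {a} {(a, a)} {a} {(a, a)}"
    unfolding component_over_def using f finite_connected_graph_singleton gcomponent_VG by simp
  then have "matched X VG P f"
    unfolding matched_def using X_over by blast
  moreover have "X \<subseteq> W"
    using \<epsilon> P(3) component_over_subset[OF X_over] x unfolding mesh_less_def a_def by blast
  moreover have "topological_graph X (EG \<inter> X \<times> X)"
    using topological_graph_closed_subgraph[OF topological_graph_VG] component_over_subset[OF X_over]
      component_over_closed[OF X_over] by blast
  ultimately show ?thesis
    using that[OF X(2)] matched_isomorphism by meson
qed

end

theorem mainTheorem12: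
  fixes VG :: "'a::metric_space set" and EG :: "('a \<times> 'a) set"
  assumes "is_Fraisse_limit VG EG"
    and "x \<in> VG"
    and "U \<subseteq> VG"
    and "\<exists>W. openin (top_of_set VG) W \<and> x \<in> W \<and> W \<subseteq> U"
  shows "\<exists>V. x \<in> V \<and> V \<subseteq> U \<and> topological_graph V (EG \<inter> (V \<times> V))
           \<and> (\<exists>h. isomorphism (top_of_set V) (EG \<inter> (V \<times> V)) (top_of_set VG) EG h)"
proof -
  interpret Fraisse_limit VG EG
    using assms(1) by unfold_locales
  obtain W where W: "openin (top_of_set VG) W" "x \<in> W" "W \<subseteq> U"
    using assms(4) by blast
  obtain V where "x \<in> V" "V \<subseteq> W" "topological_graph V (EG \<inter> V \<times> V)"
    "\<exists>h. isomorphism (top_of_set V) (EG \<inter> V \<times> V) (top_of_set VG) EG h"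
    using self_similar_neighbourhood[OF assms(2) W(1,2)] by blast
  then show ?thesis
    using W(3) by blast
qed

end
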